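(* Let $I$ be a finite set and $T$ a tree on $I$. The lattice $[\hat{0},T]$ (an interval of $\operatorname{For}(I)$) is an LL-lattice.
   Context: A tree on a finite set $I$ is a (non-planar) rooted binary tree whose leaves are bijectively labeled by $I$: vertices are inner vertices (valence $3$) and leaves and the root (valence $1$), edges oriented towards the root; one-leaf trees are allowed. A forest on $I$ is a set of trees whose leaf sets partition $I$. For forests $F,G$ on $I$, $F \leq G$ if there is a continuous map $F\to G$ which (D1) is increasing with respect to orientation towards the root, (D2) maps inner vertices to inner vertices injectively, (D3) is the identity of $I$ on leaves, (D4) is injective on each tree of $F$. This gives the poset $\operatorname{For}(I)$ with minimum $\hat{0}$ (no inner vertices); $[\hat{0},T]$ is a lattice. In a finite lattice $L$, an element $x$ is left-modular if $y\vee(x\wedge z)=(y\vee x)\wedge z$ for all $y\le z$ in $L$; a maximal chain is left-modular if all its elements are. A maximal chain $m:\hat{0}=x_0\lhd x_1\lhd\dots\lhd x_n=\hat{1}$ partitions the set $\mathsf{A}$ of atoms into levels $\mathsf{A}_i=\{a\in\mathsf{A}: a\le x_i,\ a\not\le x_{i-1}\}$, $i\in[n]$; write $a\lhd_m b$ if $a\in\mathsf{A}_i$, $b\in\mathsf{A}_j$ with $i<j$. The chain $m$ satisfies the level condition if whenever $a_0\lhd_m a_1\lhd_m\dots\lhd_m a_k$ then $a_0\not\le\bigvee_{i=1}^k a_i$. $L$ is an LL-lattice if it has a maximal chain that is left-modular and satisfies the level condition. *)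

theory Defs
  imports Main
begin

text \<open>A vertex of a forest on I which is a leaf or an inner vertex is encoded by the set
of leaves below it (its cluster). Leaves are the singletons {i}; inner vertices are the
non-singleton clusters. The maximal clusters are the leaf sets
of the trees of the forest; each tree additionally has a root vertex above its maximal
cluster (not encoded explicitly).\<close>

definition inner_cl :: "'a set \<Rightarrow> bool" where
  "inner_cl C \<longleftrightarrow> \<not> (\<exists>i. C = {i})"

definition forest :: "'a set \<Rightarrow> 'a set set \<Rightarrow> bool" where
  "forest I F \<longleftrightarrow>
     (\<forall>C\<in>F. C \<noteq> {} \<and> C \<subseteq> I) \<and>
     (\<forall>i\<in>I. {i} \<in> F) \<and>
     (\<forall>C\<in>F. \<forall>D\<in>F. C \<subseteq> D \<or> D \<subseteq> C \<or> C \<inter> D = {}) \<and>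
     (\<forall>C\<in>F. inner_cl C \<longrightarrow> (\<exists>A\<in>F. \<exists>B\<in>F. A \<inter> B = {} \<and> A \<union> B = C \<and> A \<noteq> C \<and> B \<noteq> C))"

text \<open>A tree on I: a forest consisting of a single tree, i.e. I itself is a cluster.\<close>
definition is_tree :: "'a set \<Rightarrow> 'a set set \<Rightarrow> bool" where
  "is_tree I T \<longleftrightarrow> forest I T \<and> I \<in> T"

definition forest_bot :: "'a set \<Rightarrow> 'a set set" where
  "forest_bot I = (\<lambda>i. {i}) ` I"

definition f_edge :: "'a set set \<Rightarrow> 'a set \<Rightarrow> 'a set \<Rightarrow> bool" where
  "f_edge F C D \<longleftrightarrow> C \<in> F \<and> D \<in> F \<and> C \<subset> D \<and> \<not> (\<exists>E\<in>F. C \<subset> E \<and> E \<subset> D)"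

definition f_root :: "'a set set \<Rightarrow> 'a set \<Rightarrow> bool" where
  "f_root F R \<longleftrightarrow> R \<in> F \<and> \<not> (\<exists>E\<in>F. R \<subset> E)"

text \<open>For vertices p below q in G, the monotone path from p to q: the G-edges it traverses
(an edge of G is identified with its lower endpoint E, the edge going from E to its parent)
and the G-vertices strictly inside it.\<close>
definition path_edges :: "'a set set \<Rightarrow> 'a set \<Rightarrow> 'a set \<Rightarrow> 'a set set" where
  "path_edges G p q = {E\<in>G. p \<subseteq> E \<and> E \<subset> q}"

definition path_inner :: "'a set set \<Rightarrow> 'a set \<Rightarrow> 'a set \<Rightarrow> 'a set set" where
  "path_inner G p q = {E\<in>G. p \<subset> E \<and> E \<subset> q}"

text \<open>Injectivity of the (continuous, increasing) map determined by the vertex map phi on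
the tree of F with maximal cluster R: distinct vertices have distinct images, no vertex image
lies in the interior of an edge image, and distinct edges have disjoint open images.\<close>
definition inj_on_tree :: "'a set set \<Rightarrow> 'a set set \<Rightarrow> ('a set \<Rightarrow> 'a set) \<Rightarrow> 'a set \<Rightarrow> bool" where
  "inj_on_tree F G \<phi> R \<longleftrightarrow>
     inj_on \<phi> {C\<in>F. C \<subseteq> R} \<and>
     (\<forall>C D C'. f_edge F C D \<and> D \<subseteq> R \<and> C' \<in> F \<and> C' \<subseteq> R \<longrightarrow>
                \<phi> C' \<notin> path_inner G (\<phi> C) (\<phi> D)) \<and>
     (\<forall>C D C' D'. f_edge F C D \<and> f_edge F C' D' \<and> D \<subseteq> R \<and> D' \<subseteq> R \<and> (C, D) \<noteq> (C', D') \<longrightarrow>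
                path_edges G (\<phi> C) (\<phi> D) \<inter> path_edges G (\<phi> C') (\<phi> D') = {} \<and>
                path_inner G (\<phi> C) (\<phi> D) \<inter> path_inner G (\<phi> C') (\<phi> D') = {})"

definition forest_le :: "'a set \<Rightarrow> 'a set set \<Rightarrow> 'a set set \<Rightarrow> bool" where
  "forest_le I F G \<longleftrightarrow> forest I F \<and> forest I G \<and>
     (\<exists>\<phi>. (\<forall>C\<in>F. \<phi> C \<in> G) \<and>
          (\<forall>C D. f_edge F C D \<longrightarrow> \<phi> C \<subseteq> \<phi> D) \<and>
          (\<forall>C\<in>F. inner_cl C \<longrightarrow> inner_cl (\<phi> C)) \<and> inj_on \<phi> {C\<in>F. inner_cl C} \<and>
          (\<forall>i\<in>I. \<phi> {i} = {i}) \<and>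
          (\<forall>R. f_root F R \<longrightarrow> inj_on_tree F G \<phi> R))"

definition forest_interval :: "'a set \<Rightarrow> 'a set set \<Rightarrow> 'a set set set" where
  "forest_interval I T = {F. forest_le I (forest_bot I) F \<and> forest_le I F T}"

definition is_lub :: "'b set \<Rightarrow> ('b \<Rightarrow> 'b \<Rightarrow> bool) \<Rightarrow> 'b set \<Rightarrow> 'b \<Rightarrow> bool" where
  "is_lub P le S x \<longleftrightarrow> x \<in> P \<and> (\<forall>s\<in>S. le s x) \<and> (\<forall>y\<in>P. (\<forall>s\<in>S. le s y) \<longrightarrow> le x y)"

definition is_glb :: "'b set \<Rightarrow> ('b \<Rightarrow> 'b \<Rightarrow> bool) \<Rightarrow> 'b set \<Rightarrow> 'b \<Rightarrow> bool" where
  "is_glb P le S x \<longleftrightarrow> x \<in> P \<and> (\<forall>s\<in>S. le x s) \<and> (\<forall>y\<in>P. (\<forall>s\<in>S. le y s) \<longrightarrow> le y x)"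

definition Join :: "'b set \<Rightarrow> ('b \<Rightarrow> 'b \<Rightarrow> bool) \<Rightarrow> 'b set \<Rightarrow> 'b" where
  "Join P le S = (THE x. is_lub P le S x)"

definition join :: "'b set \<Rightarrow> ('b \<Rightarrow> 'b \<Rightarrow> bool) \<Rightarrow> 'b \<Rightarrow> 'b \<Rightarrow> 'b" where
  "join P le x y = Join P le {x, y}"

definition meet :: "'b set \<Rightarrow> ('b \<Rightarrow> 'b \<Rightarrow> bool) \<Rightarrow> 'b \<Rightarrow> 'b \<Rightarrow> 'b" where
  "meet P le x y = (THE z. is_glb P le {x, y} z)"

definition finite_lattice :: "'b set \<Rightarrow> ('b \<Rightarrow> 'b \<Rightarrow> bool) \<Rightarrow> bool" where
  "finite_lattice P le \<longleftrightarrow> finite P \<and> P \<noteq> {} \<and>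
     (\<forall>x\<in>P. le x x) \<and>
     (\<forall>x\<in>P. \<forall>y\<in>P. le x y \<and> le y x \<longrightarrow> x = y) \<and>
     (\<forall>x\<in>P. \<forall>y\<in>P. \<forall>z\<in>P. le x y \<and> le y z \<longrightarrow> le x z) \<and>
     (\<forall>x\<in>P. \<forall>y\<in>P. (\<exists>z. is_lub P le {x, y} z) \<and> (\<exists>z. is_glb P le {x, y} z))"

definition covers :: "'b set \<Rightarrow> ('b \<Rightarrow> 'b \<Rightarrow> bool) \<Rightarrow> 'b \<Rightarrow> 'b \<Rightarrow> bool" where
  "covers P le x y \<longleftrightarrow> x \<in> P \<and> y \<in> P \<and> le x y \<and> x \<noteq> y \<and>
     \<not> (\<exists>z\<in>P. le x z \<and> le z y \<and> z \<noteq> x \<and> z \<noteq> y)"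

definition left_modular :: "'b set \<Rightarrow> ('b \<Rightarrow> 'b \<Rightarrow> bool) \<Rightarrow> 'b \<Rightarrow> bool" where
  "left_modular P le x \<longleftrightarrow> (\<forall>y\<in>P. \<forall>z\<in>P. le y z \<longrightarrow>
      join P le y (meet P le x z) = meet P le (join P le y x) z)"

definition maximal_chain :: "'b set \<Rightarrow> ('b \<Rightarrow> 'b \<Rightarrow> bool) \<Rightarrow> (nat \<Rightarrow> 'b) \<Rightarrow> nat \<Rightarrow> bool" where
  "maximal_chain P le c n \<longleftrightarrow> (\<forall>i\<le>n. c i \<in> P) \<and> (\<forall>x\<in>P. le (c 0) x) \<and> (\<forall>x\<in>P. le x (c n)) \<and>
     (\<forall>i<n. covers P le (c i) (c (Suc i)))"

definition atoms :: "'b set \<Rightarrow> ('b \<Rightarrow> 'b \<Rightarrow> bool) \<Rightarrow> 'b set" where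
  "atoms P le = {a\<in>P. \<exists>b\<in>P. (\<forall>x\<in>P. le b x) \<and> covers P le b a}"

definition level :: "('b \<Rightarrow> 'b \<Rightarrow> bool) \<Rightarrow> (nat \<Rightarrow> 'b) \<Rightarrow> 'b \<Rightarrow> nat" where
  "level le c a = (LEAST i. le a (c i))"

definition level_condition :: "'b set \<Rightarrow> ('b \<Rightarrow> 'b \<Rightarrow> bool) \<Rightarrow> (nat \<Rightarrow> 'b) \<Rightarrow> bool" where
  "level_condition P le c \<longleftrightarrow> (\<forall>k\<ge>1. \<forall>a :: nat \<Rightarrow> 'b.
      (\<forall>i\<le>k. a i \<in> atoms P le) \<and> (\<forall>i<k. level le c (a i) < level le c (a (Suc i))) \<longrightarrow>
      \<not> le (a 0) (Join P le (a ` {1..k})))"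

definition LL_lattice :: "'b set \<Rightarrow> ('b \<Rightarrow> 'b \<Rightarrow> bool) \<Rightarrow> bool" where
  "LL_lattice P le \<longleftrightarrow> finite_lattice P le \<and>
     (\<exists>c n. maximal_chain P le c n \<and> (\<forall>i\<le>n. left_modular P le (c i)) \<and> level_condition P le c)"

end

(* A forest F <= T is determined by the partition of I into the leaf sets of its trees, and the
   partitions that occur are the equivalence relations r that are lca-valid: two r-joined pairs
   of leaves with the same lca in T lie in one block. Hence [0,T] is isomorphic to the set of
   lca-valid equivalences ordered by inclusion, which is closed under intersection.

   Adding the inner clusters of T in order of increasing size gives a maximal chain of cluster
   relations x. Each x is left-modular: for y <= z, a walk with steps in w = y join (x meet z)
   and in x whose ends are z-related can be shortened at its steps across the top split of the
   least cluster containing it, which all have the same lca, until its ends are w-related.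

   An atom joins a single pair of leaves, and its level depends only on the lca of the pair.
   Joining pairs with distinct lcas one at a time preserves lca-validity, because lca is
   ultrametric, and only relates leaves whose lca is one of the given ones. An atom with a new
   lca is therefore not below the join, which is the level condition. *)

theory Submission
  imports Defs
begin

section \<open>Equivalence relations and walks\<close>

lemma trancl_least: "r \<subseteq> s \<Longrightarrow> trans s \<Longrightarrow> r\<^sup>+ \<subseteq> s"
  using trancl_mono_subset[of r s] trancl_id[of s] by simp

lemma equiv_reflD: "equiv A r \<Longrightarrow> a \<in> A \<Longrightarrow> (a, a) \<in> r"
  unfolding equiv_def refl_on_def by blast

lemma equiv_symD: "equiv A r \<Longrightarrow> (a, b) \<in> r \<Longrightarrow> (b, a) \<in> r"
  unfolding equiv_def sym_def by blast

lemma equiv_transD: "equiv A r \<Longrightarrow> (a, b) \<in> r \<Longrightarrow> (b, c) \<in> r \<Longrightarrow> (a, c) \<in> r"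
  unfolding equiv_def trans_def by blast

lemma equiv_class_eq_of_mem: "equiv A r \<Longrightarrow> x \<in> r``{a} \<Longrightarrow> r``{x} = r``{a}"
  by (metis Image_singleton_iff equiv_class_eq)

lemma equiv_square_union:
  assumes z: "equiv X z" and sq: "A \<times> A \<subseteq> z" "B \<times> B \<subseteq> z" and ab: "(a, b) \<in> z" "a \<in> A" "b \<in> B"
  shows "(A \<union> B) \<times> (A \<union> B) \<subseteq> z"
proof -
  have to_a: "(u, a) \<in> z" if "u \<in> A \<union> B" for u
    using that sq ab equiv_transD[OF z _ equiv_symD[OF z ab(1)]] by blast
  show ?thesis using to_a equiv_transD[OF z _ equiv_symD[OF z]] by blast
qed

definition merge :: "('a \<times> 'a) set \<Rightarrow> 'a set \<Rightarrow> ('a \<times> 'a) set" where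
  "merge r C = r \<union> {(p, q). \<exists>u\<in>C. \<exists>v\<in>C. (p, u) \<in> r \<and> (v, q) \<in> r}"

lemma equiv_merge:
  assumes r: "equiv A r" and C: "C \<subseteq> A"
  shows "equiv A (merge r C)"
proof (rule equivI)
  note sym = equiv_symD[OF r] and trans = equiv_transD[OF r]
  show "merge r C \<subseteq> A \<times> A" using equiv_type[OF r] unfolding merge_def by blast
  show "refl_on A (merge r C)" using equiv_reflD[OF r] unfolding merge_def refl_on_def by blast
  show "sym (merge r C)" using sym unfolding merge_def sym_def by blast
  show "trans (merge r C)"
  proof (rule transI)
    fix a b c assume ab: "(a, b) \<in> merge r C" and bc: "(b, c) \<in> merge r C"
    show "(a, c) \<in> merge r C"
    proof (cases "(a, b) \<in> r")
      case True
      with bc trans show ?thesis unfolding merge_def by blast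
    next
      case False
      then obtain u v where uv: "u \<in> C" "v \<in> C" "(a, u) \<in> r" "(v, b) \<in> r"
        using ab unfolding merge_def by blast
      with bc trans show ?thesis unfolding merge_def by blast
    qed
  qed
qed

lemma merge_eq_trancl:
  assumes r: "equiv A r" and C: "C \<subseteq> A"
  shows "(r \<union> C \<times> C)\<^sup>+ = merge r C"
proof
  have "r \<union> C \<times> C \<subseteq> merge r C"
    using equiv_reflD[OF r] C unfolding merge_def by blast
  moreover have "trans (merge r C)" using equiv_merge[OF r C] unfolding equiv_def by blast
  ultimately show "(r \<union> C \<times> C)\<^sup>+ \<subseteq> merge r C" by (rule trancl_least)
  show "merge r C \<subseteq> (r \<union> C \<times> C)\<^sup>+"
  proof
    fix p assume "p \<in> merge r C"
    then consider "p \<in> r" | u v where "u \<in> C" "v \<in> C" "(fst p, u) \<in> r" "(v, snd p) \<in> r"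
      unfolding merge_def by auto
    then show "p \<in> (r \<union> C \<times> C)\<^sup>+"
    proof cases
      case (2 u v)
      then have "(fst p, u) \<in> (r \<union> C \<times> C)\<^sup>+" "(u, v) \<in> (r \<union> C \<times> C)\<^sup>+"
        "(v, snd p) \<in> (r \<union> C \<times> C)\<^sup>+"
        by auto
      then show ?thesis using trancl_trans by (metis prod.collapse)
    qed (blast intro: r_into_trancl')
  qed
qed

lemma exists_change:
  assumes "P a \<noteq> P b" "a \<le> b"
  obtains l where "a \<le> l" "l < b" "P l \<noteq> P (Suc l)"
  using assms
proof (induction b)
  case 0
  then show ?case by simp
next
  case (Suc b)
  show ?case
  proof (cases "P a = P b \<or> a = Suc b")
    case True
    then show ?thesis using Suc.prems by (metis le_Suc_eq lessI)
  next
    case False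
    then show ?thesis using Suc by (metis le_Suc_eq less_SucI)
  qed
qed

lemma exists_two_changes:
  assumes "P 0 = P n" "m \<le> n" "P m \<noteq> P 0"
  obtains l1 l2 where "l1 < l2" "l2 < n" "P l1 \<noteq> P (Suc l1)" "P l2 \<noteq> P (Suc l2)"
proof -
  obtain l1 where l1: "l1 < m" "P l1 \<noteq> P (Suc l1)" using exists_change[of P 0 m] assms by auto
  obtain l2 where l2: "m \<le> l2" "l2 < n" "P l2 \<noteq> P (Suc l2)"
    using exists_change[of P m n] assms by auto
  have "l1 < l2" using l1(1) l2(1) by simp
  from this l2(2) l1(2) l2(3) show ?thesis by (rule that)
qed

definition walk :: "('a \<times> 'a) set \<Rightarrow> (nat \<Rightarrow> 'a) \<Rightarrow> nat \<Rightarrow> bool" where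
  "walk R f n \<longleftrightarrow> (\<forall>l<n. (f l, f (Suc l)) \<in> R)"

lemma trancl_walk:
  assumes "(a, b) \<in> R\<^sup>+"
  obtains f n where "walk R f n" "f 0 = a" "f n = b"
  using assms unfolding walk_def by (metis trancl_power relpow_fun_conv)

lemma walk_segment: "walk R f n \<Longrightarrow> j \<le> n \<Longrightarrow> walk R (\<lambda>t. f (t + i)) (j - i)"
  unfolding walk_def by auto

lemma walk_points_subset: "walk R f n \<Longrightarrow> R \<subseteq> X \<times> X \<Longrightarrow> f 0 \<in> X \<Longrightarrow> f ` {..n} \<subseteq> X"
proof -
  assume f: "walk R f n" "R \<subseteq> X \<times> X" "f 0 \<in> X"
  have "f l \<in> X" if "l \<le> n" for l
  proof (cases l)
    case (Suc k)
    then have "(f k, f l) \<in> R" using f(1) that unfolding walk_def by auto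
    then show ?thesis using f(2) by blast
  qed (use f(3) in simp)
  then show ?thesis by auto
qed

lemma walk_shortcut:
  assumes f: "walk R f n" and ij: "Suc i < j" "j \<le> n" and step: "(f i, f j) \<in> R"
  obtains g m where "walk R g m" "m < n" "g 0 = f 0" "g m = f n"
proof -
  define g where "g t = (if t \<le> i then f t else f (t + (j - Suc i)))" for t
  have "walk R g (n - (j - Suc i))"
    unfolding walk_def
  proof (intro allI impI)
    fix t assume t: "t < n - (j - Suc i)"
    consider "t < i" | "t = i" | "i < t" by linarith
    then show "(g t, g (Suc t)) \<in> R"
    proof cases
      case 1
      then show ?thesis using f ij unfolding walk_def g_def by auto
    next
      case 2
      then show ?thesis using step ij unfolding g_def by simp
    next
      case 3
      then have "t + (j - Suc i) < n" using t ij by linarith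
      then show ?thesis using f 3 unfolding walk_def g_def by auto
    qed
  qed
  moreover have "n - (j - Suc i) < n" "g 0 = f 0" "g (n - (j - Suc i)) = f n"
    using ij unfolding g_def by auto
  ultimately show ?thesis by (rule that)
qed

section \<open>Transfer of LL-lattices along order embeddings\<close>

lemma Join_subset_eqI: "is_lub P (\<subseteq>) S x \<Longrightarrow> Join P (\<subseteq>) S = x"
  unfolding Join_def by (rule the_equality) (auto simp: is_lub_def)

lemma meet_subset_eqI: "is_glb P (\<subseteq>) {x, y} z \<Longrightarrow> meet P (\<subseteq>) x y = z"
  unfolding meet_def by (rule the_equality) (auto simp: is_glb_def)

locale lattice_embedding =
  fixes P :: "'c set" and le :: "'c \<Rightarrow> 'c \<Rightarrow> bool" and f :: "'c \<Rightarrow> 'b" and le' :: "'b \<Rightarrow> 'b \<Rightarrow> bool"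
  assumes lattice: "finite_lattice P le"
    and complete: "\<And>S. S \<subseteq> P \<Longrightarrow> \<exists>x. is_lub P le S x"
    and le_iff: "\<And>x y. x \<in> P \<Longrightarrow> y \<in> P \<Longrightarrow> le' (f x) (f y) \<longleftrightarrow> le x y"
begin

lemma le_refl_on: "x \<in> P \<Longrightarrow> le x x"
  using lattice unfolding finite_lattice_def by blast

lemma le_antisym_on: "x \<in> P \<Longrightarrow> y \<in> P \<Longrightarrow> le x y \<Longrightarrow> le y x \<Longrightarrow> x = y"
  using lattice unfolding finite_lattice_def by blast

lemma le_trans_on: "x \<in> P \<Longrightarrow> y \<in> P \<Longrightarrow> z \<in> P \<Longrightarrow> le x y \<Longrightarrow> le y z \<Longrightarrow> le x z"
  using lattice unfolding finite_lattice_def by blast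

lemma inj_on_f: "inj_on f P"
  by (rule inj_onI) (metis le_iff le_refl_on le_antisym_on)

lemma is_lub_image_iff: "S \<subseteq> P \<Longrightarrow> x \<in> P \<Longrightarrow> is_lub (f ` P) le' (f ` S) (f x) \<longleftrightarrow> is_lub P le S x"
  unfolding is_lub_def using le_iff by (auto simp: subset_iff)

lemma is_glb_image_iff: "S \<subseteq> P \<Longrightarrow> x \<in> P \<Longrightarrow> is_glb (f ` P) le' (f ` S) (f x) \<longleftrightarrow> is_glb P le S x"
  unfolding is_glb_def using le_iff by (auto simp: subset_iff)

lemma is_lub_unique: "is_lub P le S x \<Longrightarrow> is_lub P le S y \<Longrightarrow> x = y"
  unfolding is_lub_def using le_antisym_on by blast

lemma is_glb_unique: "is_glb P le S x \<Longrightarrow> is_glb P le S y \<Longrightarrow> x = y"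
  unfolding is_glb_def using le_antisym_on by blast

lemma is_lub_Join: "S \<subseteq> P \<Longrightarrow> is_lub P le S (Join P le S)"
  unfolding Join_def using complete is_lub_unique by (metis theI)

lemma is_glb_meet: "x \<in> P \<Longrightarrow> y \<in> P \<Longrightarrow> is_glb P le {x, y} (meet P le x y)"
  unfolding meet_def using lattice is_glb_unique unfolding finite_lattice_def by (metis theI)

lemma Join_in: "S \<subseteq> P \<Longrightarrow> Join P le S \<in> P"
  using is_lub_Join unfolding is_lub_def by blast

lemma Join_image: "S \<subseteq> P \<Longrightarrow> Join (f ` P) le' (f ` S) = f (Join P le S)"
proof -
  assume S: "S \<subseteq> P"
  have J: "is_lub P le S (Join P le S)" "Join P le S \<in> P"
    using is_lub_Join[OF S] unfolding is_lub_def by auto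
  have "is_lub (f ` P) le' (f ` S) (f (Join P le S))" using is_lub_image_iff[OF S J(2)] J(1) by blast
  moreover have "y = f (Join P le S)" if y: "is_lub (f ` P) le' (f ` S) y" for y
  proof -
    obtain x where x: "x \<in> P" "y = f x" using y unfolding is_lub_def by blast
    then show ?thesis using y is_lub_image_iff[OF S x(1)] is_lub_unique J(1) by blast
  qed
  ultimately show ?thesis unfolding Join_def[of "f ` P"] by (rule the_equality)
qed

lemma meet_image: "x \<in> P \<Longrightarrow> y \<in> P \<Longrightarrow> meet (f ` P) le' (f x) (f y) = f (meet P le x y)"
proof -
  assume xy: "x \<in> P" "y \<in> P"
  then have S: "{x, y} \<subseteq> P" by blast
  have M: "is_glb P le {x, y} (meet P le x y)" "meet P le x y \<in> P"
    using is_glb_meet[OF xy] unfolding is_glb_def by auto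
  have "is_glb (f ` P) le' {f x, f y} (f (meet P le x y))" using is_glb_image_iff[OF S M(2)] M(1) by simp
  moreover have "w = f (meet P le x y)" if w: "is_glb (f ` P) le' {f x, f y} w" for w
  proof -
    obtain v where v: "v \<in> P" "w = f v" using w unfolding is_glb_def by blast
    then show ?thesis using w is_glb_image_iff[OF S v(1)] is_glb_unique M(1) by auto
  qed
  ultimately show ?thesis unfolding meet_def[of "f ` P"] by (rule the_equality)
qed

lemma join_image: "x \<in> P \<Longrightarrow> y \<in> P \<Longrightarrow> join (f ` P) le' (f x) (f y) = f (join P le x y)"
  unfolding join_def using Join_image[of "{x, y}"] by simp

lemma join_in: "x \<in> P \<Longrightarrow> y \<in> P \<Longrightarrow> join P le x y \<in> P"
  unfolding join_def using is_lub_Join[of "{x, y}"] unfolding is_lub_def by blast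

lemma meet_in: "x \<in> P \<Longrightarrow> y \<in> P \<Longrightarrow> meet P le x y \<in> P"
  using is_glb_meet unfolding is_glb_def by blast

lemma finite_lattice_image: "finite_lattice (f ` P) le'"
  unfolding finite_lattice_def
proof (intro conjI ballI impI)
  show "finite (f ` P)" "f ` P \<noteq> {}" using lattice unfolding finite_lattice_def by auto
next
  fix p assume "p \<in> f ` P"
  then show "le' p p" using le_iff le_refl_on by auto
next
  fix p q assume "p \<in> f ` P" "q \<in> f ` P" and pq: "le' p q \<and> le' q p"
  then obtain x y where xy: "x \<in> P" "y \<in> P" "p = f x" "q = f y" by blast
  then have "le x y" "le y x" using pq le_iff by auto
  then show "p = q" using le_antisym_on[OF xy(1,2)] xy(3,4) by simp
next
  fix p q r assume "p \<in> f ` P" "q \<in> f ` P" "r \<in> f ` P" and pqr: "le' p q \<and> le' q r"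
  then obtain x y z where xyz: "x \<in> P" "y \<in> P" "z \<in> P" "p = f x" "q = f y" "r = f z" by blast
  then have "le x y" "le y z" using pqr le_iff by auto
  then show "le' p r" using le_trans_on[OF xyz(1-3)] le_iff[OF xyz(1,3)] xyz(4,6) by simp
next
  fix p q assume "p \<in> f ` P" "q \<in> f ` P"
  then obtain x y where xy: "x \<in> P" "y \<in> P" "p = f x" "q = f y" by blast
  have S: "{x, y} \<subseteq> P" using xy by blast
  have "is_lub (f ` P) le' (f ` {x, y}) (f (Join P le {x, y}))"
    using is_lub_image_iff[OF S Join_in[OF S]] is_lub_Join[OF S] by blast
  then show "\<exists>z. is_lub (f ` P) le' {p, q} z" using xy by auto
  have "is_glb (f ` P) le' (f ` {x, y}) (f (meet P le x y))"
    using is_glb_image_iff[OF S meet_in[OF xy(1,2)]] is_glb_meet[OF xy(1,2)] by blast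
  then show "\<exists>z. is_glb (f ` P) le' {p, q} z" using xy by auto
qed

lemma covers_image_iff: "x \<in> P \<Longrightarrow> y \<in> P \<Longrightarrow> covers (f ` P) le' (f x) (f y) \<longleftrightarrow> covers P le x y"
  unfolding covers_def using le_iff inj_on_f by (auto simp: inj_on_eq_iff)

lemma atoms_image: "atoms (f ` P) le' = f ` atoms P le"
  unfolding atoms_def using covers_image_iff le_iff by auto

lemma level_image: "a \<in> P \<Longrightarrow> (\<And>i. c i \<in> P) \<Longrightarrow> level le' (f \<circ> c) (f a) = level le c a"
  unfolding level_def using le_iff by simp

lemma maximal_chain_image:
  "maximal_chain P le c n \<Longrightarrow> (\<And>i. c i \<in> P) \<Longrightarrow> maximal_chain (f ` P) le' (f \<circ> c) n"
  unfolding maximal_chain_def using le_iff covers_image_iff by auto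

lemma left_modular_image:
  assumes x: "x \<in> P" and lm: "left_modular P le x"
  shows "left_modular (f ` P) le' (f x)"
  unfolding left_modular_def
proof (intro ballI impI)
  fix p q assume "p \<in> f ` P" "q \<in> f ` P" "le' p q"
  then obtain y z where yz: "y \<in> P" "z \<in> P" "p = f y" "q = f z" "le y z" using le_iff by auto
  then show "join (f ` P) le' p (meet (f ` P) le' (f x) q)
      = meet (f ` P) le' (join (f ` P) le' p (f x)) q"
    using lm x join_image meet_image join_in meet_in unfolding left_modular_def by simp
qed

lemma level_condition_image:
  assumes c: "\<And>i. c i \<in> P" and lc: "level_condition P le c"
  shows "level_condition (f ` P) le' (f \<circ> c)"
  unfolding level_condition_def
proof (intro allI impI notI)
  fix k :: nat and a :: "nat \<Rightarrow> 'b"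
  assume k: "1 \<le> k"
    and a: "(\<forall>i\<le>k. a i \<in> atoms (f ` P) le')
      \<and> (\<forall>i<k. level le' (f \<circ> c) (a i) < level le' (f \<circ> c) (a (Suc i)))"
    and below: "le' (a 0) (Join (f ` P) le' (a ` {1..k}))"
  define b where "b i = inv_into P f (a i)" for i
  have b: "b i \<in> atoms P le" "a i = f (b i)" if i: "i \<le> k" for i
  proof -
    obtain x where x: "x \<in> atoms P le" "a i = f x" using a i atoms_image by auto
    then have "x \<in> P" unfolding atoms_def by blast
    then have "b i = x" unfolding b_def x(2) using inv_into_f_f[OF inj_on_f] by blast
    then show "b i \<in> atoms P le" "a i = f (b i)" using x by simp_all
  qed
  have bP: "b i \<in> P" if "i \<le> k" for i using b(1)[OF that] unfolding atoms_def by blast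
  have level_b: "level le c (b i) = level le' (f \<circ> c) (a i)" if "i \<le> k" for i
    using level_image[OF bP[OF that] c] b(2)[OF that] by simp
  have "\<forall>i<k. level le c (b i) < level le c (b (Suc i))"
    using a level_b by (simp add: less_imp_le_nat Suc_leI)
  then have not_below: "\<not> le (b 0) (Join P le (b ` {1..k}))"
    using lc k b(1) unfolding level_condition_def by blast
  have S: "b ` {1..k} \<subseteq> P" using bP by auto
  have "a ` {1..k} = f ` b ` {1..k}" using b(2) by (auto simp: image_image)
  then have "Join (f ` P) le' (a ` {1..k}) = f (Join P le (b ` {1..k}))" using Join_image[OF S] by simp
  then show False using below not_below b(2)[of 0] le_iff[OF bP[of 0] Join_in[OF S]] by simp
qed

lemma LL_lattice_image:
  assumes c: "maximal_chain P le c n" "\<And>i. c i \<in> P" "\<forall>i\<le>n. left_modular P le (c i)"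
    and lc: "level_condition P le c"
  shows "LL_lattice (f ` P) le'"
proof -
  have "\<forall>i\<le>n. left_modular (f ` P) le' ((f \<circ> c) i)" using left_modular_image c(2,3) by simp
  then show ?thesis
    unfolding LL_lattice_def
    using finite_lattice_image maximal_chain_image[OF c(1,2)] level_condition_image[OF c(2) lc] by blast
qed

end

section \<open>Forests and maps between forests\<close>

lemma forest_subset: "forest I F \<Longrightarrow> C \<in> F \<Longrightarrow> C \<subseteq> I"
  unfolding forest_def by (elim conjE) simp

lemma forest_nonempty: "forest I F \<Longrightarrow> C \<in> F \<Longrightarrow> C \<noteq> {}"
  unfolding forest_def by (elim conjE) simp

lemma forest_singleton: "forest I F \<Longrightarrow> i \<in> I \<Longrightarrow> {i} \<in> F"
  unfolding forest_def by (elim conjE) simp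

lemma forest_laminar: "forest I F \<Longrightarrow> C \<in> F \<Longrightarrow> D \<in> F \<Longrightarrow> C \<inter> D \<noteq> {} \<Longrightarrow> C \<subseteq> D \<or> D \<subseteq> C"
  unfolding forest_def by (elim conjE) blast

lemma forest_binary:
  assumes "forest I F" "C \<in> F" "inner_cl C"
  obtains A B where "A \<in> F" "B \<in> F" "A \<inter> B = {}" "A \<union> B = C" "A \<noteq> C" "B \<noteq> C"
proof -
  have "\<forall>C\<in>F. inner_cl C \<longrightarrow> (\<exists>A\<in>F. \<exists>B\<in>F. A \<inter> B = {} \<and> A \<union> B = C \<and> A \<noteq> C \<and> B \<noteq> C)"
    using assms(1) unfolding forest_def by (elim conjE)
  then show ?thesis using assms(2,3) that by blast
qed

lemma finite_forest: "finite I \<Longrightarrow> forest I F \<Longrightarrow> finite F"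
  by (meson PowI finite_Pow_iff finite_subset forest_subset subsetI)

lemma inner_clI: "a \<in> C \<Longrightarrow> b \<in> C \<Longrightarrow> a \<noteq> b \<Longrightarrow> inner_cl C"
  unfolding inner_cl_def by blast

lemma inner_clE:
  assumes "inner_cl C" "C \<noteq> {}"
  obtains a b where "a \<in> C" "b \<in> C" "a \<noteq> b"
  using assms unfolding inner_cl_def by blast

lemma forest_subcluster_in_child:
  assumes f: "forest I F" and AB: "A \<in> F" "B \<in> F" "A \<inter> B = {}" "A \<union> B = C"
    and E: "E \<in> F" "E \<subset> C"
  shows "E \<subseteq> A \<or> E \<subseteq> B"
  using forest_laminar[OF f E(1) AB(1)] forest_laminar[OF f E(1) AB(2)]
    forest_nonempty[OF f E(1)] forest_nonempty[OF f AB(1)] AB(3,4) E(2)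
  by blast

definition forest_lca :: "'a set set \<Rightarrow> 'a set \<Rightarrow> 'a set" where
  "forest_lca F S = \<Inter>{E\<in>F. S \<subseteq> E}"

lemma forest_lca_least: "E \<in> F \<Longrightarrow> S \<subseteq> E \<Longrightarrow> forest_lca F S \<subseteq> E"
  unfolding forest_lca_def by blast

lemma forest_lca_eqI: "X \<in> F \<Longrightarrow> S \<subseteq> X \<Longrightarrow> (\<And>E. E \<in> F \<Longrightarrow> S \<subseteq> E \<Longrightarrow> X \<subseteq> E) \<Longrightarrow> forest_lca F S = X"
  unfolding forest_lca_def by blast

lemma not_subset_below_forest_lca: "A \<in> F \<Longrightarrow> A \<subset> forest_lca F S \<Longrightarrow> \<not> S \<subseteq> A"
  using forest_lca_least by blast

lemma forest_lca_cluster: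
  assumes fin: "finite I" and f: "forest I F" and S: "S \<noteq> {}" "E \<in> F" "S \<subseteq> E"
  shows "forest_lca F S \<in> F" "S \<subseteq> forest_lca F S"
proof -
  let ?M = "{E\<in>F. S \<subseteq> E}"
  have "finite ?M" using finite_forest[OF fin f] by simp
  moreover have "?M \<noteq> {}" using S(2,3) by blast
  ultimately obtain m where m: "m \<in> ?M" and minimal: "\<forall>E\<in>?M. E \<subseteq> m \<longrightarrow> m = E"
    using finite_has_minimal[of ?M] by auto
  have "m \<subseteq> E" if E: "E \<in> ?M" for E
  proof -
    have "E \<inter> m \<noteq> {}" using E m S(1) by blast
    then have "E \<subseteq> m \<or> m \<subseteq> E" using forest_laminar[OF f] E m by blast
    then show ?thesis using minimal E by blast
  qed
  then have "forest_lca F S = m" using m by (intro forest_lca_eqI) auto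
  then show "forest_lca F S \<in> F" "S \<subseteq> forest_lca F S" using m by auto
qed

lemma f_edgeI:
  "C \<in> F \<Longrightarrow> D \<in> F \<Longrightarrow> C \<subset> D \<Longrightarrow> (\<And>E. E \<in> F \<Longrightarrow> C \<subset> E \<Longrightarrow> E \<subset> D \<Longrightarrow> False) \<Longrightarrow> f_edge F C D"
  unfolding f_edge_def by metis

lemma f_edgeD:
  assumes "f_edge F C D"
  shows "C \<in> F" "D \<in> F" "C \<subset> D" "\<And>E. E \<in> F \<Longrightarrow> C \<subset> E \<Longrightarrow> E \<subset> D \<Longrightarrow> False"
  using assms unfolding f_edge_def by metis+

lemma forest_children:
  assumes f: "forest I F" and C: "C \<in> F" "inner_cl C"
  obtains A B where "f_edge F A C" "f_edge F B C" "A \<inter> B = {}" "A \<union> B = C" "A \<noteq> B"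
proof -
  obtain A B where AB: "A \<in> F" "B \<in> F" "A \<inter> B = {}" "A \<union> B = C" "A \<noteq> C" "B \<noteq> C"
    using forest_binary[OF f C] .
  have ne: "A \<noteq> {}" "B \<noteq> {}" using forest_nonempty[OF f] AB(1,2) by auto
  have edge: "f_edge F X C" if "X \<in> {A, B}" for X
  proof (rule f_edgeI)
    show "X \<in> F" "C \<in> F" "X \<subset> C" using that AB C(1) by auto
    show False if "E \<in> F" "X \<subset> E" "E \<subset> C" for E
      using forest_subcluster_in_child[OF f AB(1-4) that(1,3)] that(2) \<open>X \<in> {A, B}\<close> AB(3) ne
      by blast
  qed
  have "A \<noteq> B" using AB(3) ne by blast
  with edge[of A] edge[of B] AB(3,4) show ?thesis by (intro that) auto
qed

lemma f_edge_unique_parent: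
  assumes f: "forest I F" and e: "f_edge F C D" "f_edge F C D'"
  shows "D = D'"
proof -
  have "C \<noteq> {}" using forest_nonempty[OF f f_edgeD(1)[OF e(1)]] .
  then have "D \<subseteq> D' \<or> D' \<subseteq> D"
    using forest_laminar[OF f f_edgeD(2)[OF e(1)] f_edgeD(2)[OF e(2)]] f_edgeD(3)[OF e(1)]
      f_edgeD(3)[OF e(2)] by blast
  then show ?thesis
    using f_edgeD(4)[OF e(1) f_edgeD(2)[OF e(2)]] f_edgeD(4)[OF e(2) f_edgeD(2)[OF e(1)]]
      f_edgeD(3)[OF e(1)] f_edgeD(3)[OF e(2)] by blast
qed

lemma f_root_exists:
  assumes fin: "finite I" and f: "forest I F" and C: "C \<in> F"
  obtains R where "f_root F R" "C \<subseteq> R"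
proof -
  let ?M = "{E\<in>F. C \<subseteq> E}"
  have "finite ?M" using finite_forest[OF fin f] by simp
  then obtain m where "m \<in> ?M" "\<And>E. E \<in> ?M \<Longrightarrow> m \<subseteq> E \<Longrightarrow> m = E"
    using finite_has_maximal[of ?M] C by auto
  then have "f_root F m" "C \<subseteq> m" unfolding f_root_def by auto
  then show ?thesis using that by blast
qed

lemma f_roots_disjoint:
  assumes f: "forest I F" and R: "f_root F R" "f_root F R'" and a: "a \<in> R" "a \<in> R'"
  shows "R = R'"
  using forest_laminar[OF f, of R R'] R a unfolding f_root_def by blast

definition root_rel :: "'a set set \<Rightarrow> ('a \<times> 'a) set" where
  "root_rel F = {(a, b). \<exists>R. f_root F R \<and> a \<in> R \<and> b \<in> R}"

lemma root_rel_class: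
  assumes f: "forest I F" and R: "f_root F R" "a \<in> R"
  shows "root_rel F `` {a} = R"
  using f_roots_disjoint[OF f R(1)] R unfolding root_rel_def by blast

lemma equiv_root_rel:
  assumes fin: "finite I" and f: "forest I F"
  shows "equiv I (root_rel F)"
proof (rule equivI)
  have "\<exists>R. f_root F R \<and> a \<in> R" if "a \<in> I" for a
    using f_root_exists[OF fin f forest_singleton[OF f that]] by blast
  then show "refl_on I (root_rel F)"
    using forest_subset[OF f] unfolding root_rel_def refl_on_def f_root_def by blast
  show "root_rel F \<subseteq> I \<times> I"
    using forest_subset[OF f] unfolding root_rel_def f_root_def by blast
  show "sym (root_rel F)" unfolding root_rel_def sym_def by blast
  show "trans (root_rel F)"
    using f_roots_disjoint[OF f] unfolding root_rel_def trans_def by blast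
qed

locale forest_map =
  fixes I :: "'a set" and F G :: "'a set set" and \<phi> :: "'a set \<Rightarrow> 'a set"
  assumes finite_I: "finite I" and forest_F: "forest I F" and forest_G: "forest I G"
    and image_in: "\<And>C. C \<in> F \<Longrightarrow> \<phi> C \<in> G"
    and edge_mono: "\<And>C D. f_edge F C D \<Longrightarrow> \<phi> C \<subseteq> \<phi> D"
    and leaf_fixed: "\<And>i. i \<in> I \<Longrightarrow> \<phi> {i} = {i}"
    and inj_on_tree: "\<And>R. f_root F R \<Longrightarrow> inj_on \<phi> {C\<in>F. C \<subseteq> R}"
    and edge_paths_disjoint: "\<And>R C D C' D'. f_root F R \<Longrightarrow> f_edge F C D \<Longrightarrow> f_edge F C' D'
      \<Longrightarrow> D \<subseteq> R \<Longrightarrow> D' \<subseteq> R \<Longrightarrow> (C, D) \<noteq> (C', D')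
      \<Longrightarrow> path_edges G (\<phi> C) (\<phi> D) \<inter> path_edges G (\<phi> C') (\<phi> D') = {}"

lemma forest_le_forest_map:
  assumes "finite I" "forest_le I F G"
  obtains \<phi> where "forest_map I F G \<phi>" "inj_on \<phi> {C\<in>F. inner_cl C}"
proof -
  obtain \<phi> where \<phi>: "\<forall>C\<in>F. \<phi> C \<in> G" "\<forall>C D. f_edge F C D \<longrightarrow> \<phi> C \<subseteq> \<phi> D"
    "inj_on \<phi> {C\<in>F. inner_cl C}" "\<forall>i\<in>I. \<phi> {i} = {i}" "\<forall>R. f_root F R \<longrightarrow> inj_on_tree F G \<phi> R"
    and forests: "forest I F" "forest I G"
    using assms(2) unfolding forest_le_def by blast
  have "forest_map I F G \<phi>"
    using assms(1) forests \<phi>(1,2,4,5) unfolding forest_map_def inj_on_tree_def by meson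
  then show ?thesis using that \<phi>(3) by blast
qed

context forest_map
begin

lemma subset_image: "C \<in> F \<Longrightarrow> C \<subseteq> \<phi> C"
proof (induction "card C" arbitrary: C rule: less_induct)
  case less
  show ?case
  proof (cases "inner_cl C")
    case False
    then obtain i where "C = {i}" unfolding inner_cl_def by blast
    then show ?thesis using forest_subset[OF forest_F less.prems] leaf_fixed by auto
  next
    case True
    obtain A B where AB: "f_edge F A C" "f_edge F B C" "A \<union> B = C"
      using forest_children[OF forest_F less.prems True] by metis
    have "finite C" using forest_subset[OF forest_F less.prems] finite_I finite_subset by blast
    then have "card A < card C" "card B < card C"
      using f_edgeD(3)[OF AB(1)] f_edgeD(3)[OF AB(2)] by (auto intro: psubset_card_mono)
    then have "A \<subseteq> \<phi> A" "B \<subseteq> \<phi> B" using less.hyps f_edgeD(1) AB(1,2) by auto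
    then show ?thesis using edge_mono[OF AB(1)] edge_mono[OF AB(2)] AB(3) by blast
  qed
qed

lemma f_edge_root:
  assumes "f_edge F A C"
  obtains R where "f_root F R" "C \<subseteq> R"
  using f_root_exists[OF finite_I forest_F f_edgeD(2)[OF assms]] .

lemma edge_image_strict:
  assumes e: "f_edge F A C"
  shows "\<phi> A \<subset> \<phi> C"
proof -
  obtain R where R: "f_root F R" "C \<subseteq> R" using f_edge_root[OF e] .
  have "\<phi> A \<noteq> \<phi> C"
    using inj_on_tree[OF R(1)] f_edgeD(1-3)[OF e] R(2) unfolding inj_on_def by blast
  then show ?thesis using edge_mono[OF e] by blast
qed

lemma sibling_paths_disjoint:
  assumes e: "f_edge F A C" "f_edge F B C" "A \<noteq> B"
  shows "path_edges G (\<phi> A) (\<phi> C) \<inter> path_edges G (\<phi> B) (\<phi> C) = {}"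
proof -
  obtain R where R: "f_root F R" "C \<subseteq> R" using f_edge_root[OF e(1)] .
  show ?thesis using edge_paths_disjoint[OF R(1) e(1,2) R(2) R(2)] e(3) by simp
qed

lemma sibling_images_disjoint:
  assumes e: "f_edge F A C" "f_edge F B C" "A \<noteq> B"
  shows "\<phi> A \<inter> \<phi> B = {}"
proof (rule ccontr)
  assume "\<phi> A \<inter> \<phi> B \<noteq> {}"
  then have "\<phi> A \<subseteq> \<phi> B \<or> \<phi> B \<subseteq> \<phi> A"
    using forest_laminar[OF forest_G image_in image_in] f_edgeD(1) e(1,2) by blast
  then show False
    using sibling_paths_disjoint[OF e] edge_image_strict[OF e(1)] edge_image_strict[OF e(2)]
      image_in f_edgeD(1) e(1,2) unfolding path_edges_def by blast
qed

text \<open>Such an E contains the images of both siblings; if it missed part of the image of the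
  parent, it would lie on both image paths from the siblings to their parent.\<close>

lemma image_subset_if_meets_siblings:
  assumes e: "f_edge F A C" "f_edge F B C" "A \<noteq> B"
    and E: "E \<in> G" "E \<inter> A \<noteq> {}" "E \<inter> B \<noteq> {}"
  shows "\<phi> C \<subseteq> E"
proof -
  have AB: "A \<in> F" "B \<in> F" using f_edgeD(1) e(1,2) by auto
  have disj: "\<phi> A \<inter> \<phi> B = {}" using sibling_images_disjoint[OF e] .
  have "\<phi> A \<subseteq> E"
    using forest_laminar[OF forest_G image_in[OF AB(1)] E(1)] subset_image[OF AB(1)]
      subset_image[OF AB(2)] E(2,3) disj by blast
  moreover have "\<phi> B \<subseteq> E"
    using forest_laminar[OF forest_G image_in[OF AB(2)] E(1)] subset_image[OF AB(1)]
      subset_image[OF AB(2)] E(2,3) disj by blast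
  moreover have "\<phi> C \<inter> E \<noteq> {}"
    using \<open>\<phi> A \<subseteq> E\<close> edge_image_strict[OF e(1)] subset_image[OF AB(1)] E(2) by blast
  ultimately show ?thesis
    using forest_laminar[OF forest_G image_in[OF f_edgeD(2)[OF e(1)]] E(1)]
      sibling_paths_disjoint[OF e] E(1) unfolding path_edges_def by blast
qed

lemma image_least:
  assumes C: "C \<in> F" and L: "L \<in> G" "C \<subseteq> L"
  shows "\<phi> C \<subseteq> L"
proof (cases "inner_cl C")
  case False
  then obtain i where "C = {i}" unfolding inner_cl_def by blast
  then show ?thesis using L forest_subset[OF forest_F C] leaf_fixed by auto
next
  case True
  obtain A B where AB: "f_edge F A C" "f_edge F B C" "A \<union> B = C" "A \<noteq> B"
    using forest_children[OF forest_F C True] by metis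
  have "A \<noteq> {}" "B \<noteq> {}" using forest_nonempty[OF forest_F] f_edgeD(1) AB(1,2) by auto
  then show ?thesis using image_subset_if_meets_siblings[OF AB(1,2,4) L(1)] AB(3) L(2) by blast
qed

lemma image_eq_forest_lca: "C \<in> F \<Longrightarrow> \<phi> C = forest_lca G C"
  by (rule sym, rule forest_lca_eqI) (use image_in subset_image image_least in auto)

lemma image_mono: "C \<in> F \<Longrightarrow> C' \<in> F \<Longrightarrow> C \<subseteq> C' \<Longrightarrow> \<phi> C \<subseteq> \<phi> C'"
  using image_least[of C "\<phi> C'"] image_in subset_image by blast

lemma root_inter_image:
  assumes R: "f_root F R" and C: "C \<in> F" "C \<subseteq> R"
  shows "R \<inter> \<phi> C = C"
proof (rule ccontr)
  assume "R \<inter> \<phi> C \<noteq> C"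
  then obtain a where a: "a \<in> R" "a \<in> \<phi> C" "a \<notin> C" using subset_image[OF C(1)] C(2) by blast
  obtain c where c: "c \<in> C" using forest_nonempty[OF forest_F C(1)] by blast
  define C' where "C' = forest_lca F (insert a C)"
  have RF: "R \<in> F" using R unfolding f_root_def by blast
  have C': "C' \<in> F" "insert a C \<subseteq> C'"
    using forest_lca_cluster[OF finite_I forest_F _ RF, of "insert a C"] a(1) C(2)
    unfolding C'_def by auto
  have "inner_cl C'" using inner_clI[of c C' a] C'(2) c a(3) by blast
  then obtain A B where AB: "f_edge F A C'" "f_edge F B C'" "A \<inter> B = {}" "A \<union> B = C'" "A \<noteq> B"
    using forest_children[OF forest_F C'(1)] by metis
  have no_child: False
    if X: "f_edge F X C'" and Y: "f_edge F Y C'" "X \<inter> Y = {}" "X \<union> Y = C'" "X \<noteq> Y" "C \<subseteq> X" for X Y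
  proof -
    have "a \<notin> X"
      using forest_lca_least[OF f_edgeD(1)[OF X], of "insert a C"] f_edgeD(3)[OF X] that(6)
      unfolding C'_def by blast
    then have "a \<in> Y" using C'(2) Y(3) by blast
    moreover have "\<phi> C \<subseteq> \<phi> X" using image_mono[OF C(1) f_edgeD(1)[OF X] that(6)] .
    ultimately show False
      using a(2) subset_image[OF f_edgeD(1)[OF Y(1)]] sibling_images_disjoint[OF X Y(1,4)] by blast
  qed
  have "C \<subset> C'" using C'(2) a(3) by blast
  then have "C \<subseteq> A \<or> C \<subseteq> B"
    using forest_subcluster_in_child[OF forest_F f_edgeD(1)[OF AB(1)] f_edgeD(1)[OF AB(2)] AB(3,4) C(1)]
    by blast
  then show False
    using no_child[OF AB(1,2,3,4,5)] no_child[OF AB(2,1)] AB(3,4,5) by blast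
qed

lemma root_inter_cluster:
  assumes R: "f_root F R" and E: "E \<in> G" "R \<inter> E \<noteq> {}"
  shows "R \<inter> E \<in> F"
proof -
  define C where "C = forest_lca F (R \<inter> E)"
  have RF: "R \<in> F" using R unfolding f_root_def by blast
  have C: "C \<in> F" "R \<inter> E \<subseteq> C" "C \<subseteq> R"
    using forest_lca_cluster[OF finite_I forest_F E(2) RF] forest_lca_least[OF RF]
    unfolding C_def by auto
  have "C \<subseteq> E"
  proof (rule ccontr)
    assume CE: "\<not> C \<subseteq> E"
    then have "inner_cl C" using C(2) E(2) unfolding inner_cl_def by blast
    then obtain A B where AB: "f_edge F A C" "f_edge F B C" "A \<union> B = C" "A \<noteq> B"
      using forest_children[OF forest_F C(1)] by metis
    have "\<not> R \<inter> E \<subseteq> X" if "f_edge F X C" for X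
      using forest_lca_least[OF f_edgeD(1)[OF that], of "R \<inter> E"] f_edgeD(3)[OF that]
      unfolding C_def by blast
    then have "E \<inter> A \<noteq> {}" "E \<inter> B \<noteq> {}" using AB C(2) by blast+
    then have "\<phi> C \<subseteq> E" using image_subset_if_meets_siblings[OF AB(1,2,4) E(1)] by blast
    then show False using subset_image[OF C(1)] CE by blast
  qed
  then have "C = R \<inter> E" using C by blast
  then show ?thesis using C(1) by simp
qed

end

section \<open>Partitions compatible with a tree\<close>

locale finite_tree =
  fixes I :: "'a set" and T :: "'a set set"
  assumes finite_I: "finite I" and tree_T: "is_tree I T"
begin

lemma forest_T: "forest I T"
  using tree_T unfolding is_tree_def by simp

lemma I_in_T: "I \<in> T"
  using tree_T unfolding is_tree_def by simp

lemma forest_lca_T: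
  assumes "S \<noteq> {}" "S \<subseteq> I"
  shows "forest_lca T S \<in> T" "S \<subseteq> forest_lca T S"
  using forest_lca_cluster[OF finite_I forest_T assms(1) I_in_T assms(2)] by auto

lemma finite_cluster: "D \<in> T \<Longrightarrow> finite D"
  using finite_subset[OF forest_subset[OF forest_T] finite_I] .

definition lca :: "'a \<Rightarrow> 'a \<Rightarrow> 'a set" where
  "lca a b = forest_lca T {a, b}"

lemma lca_in_T: "a \<in> I \<Longrightarrow> b \<in> I \<Longrightarrow> lca a b \<in> T"
  unfolding lca_def using forest_lca_T[of "{a, b}"] by auto

lemma mem_lca: "a \<in> I \<Longrightarrow> b \<in> I \<Longrightarrow> a \<in> lca a b \<and> b \<in> lca a b"
  unfolding lca_def using forest_lca_T[of "{a, b}"] by auto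

lemma lca_least: "E \<in> T \<Longrightarrow> a \<in> E \<Longrightarrow> b \<in> E \<Longrightarrow> lca a b \<subseteq> E"
  unfolding lca_def by (rule forest_lca_least) auto

lemma lca_commute: "lca a b = lca b a"
  unfolding lca_def by (simp add: insert_commute)

lemma lca_self: "a \<in> I \<Longrightarrow> lca a a = {a}"
  unfolding lca_def by (rule forest_lca_eqI) (auto intro: forest_singleton[OF forest_T])

lemma lca_eq_singleton: "a \<in> I \<Longrightarrow> b \<in> I \<Longrightarrow> lca a b = {c} \<Longrightarrow> a = c \<and> b = c"
  using mem_lca by blast

lemma lca_eq_parent:
  assumes D: "D \<in> T" and AB: "A \<in> T" "B \<in> T" "A \<inter> B = {}" "A \<union> B = D"
    and a: "a \<in> A" and b: "b \<in> B"
  shows "lca a b = D"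
proof -
  have ab: "a \<in> I" "b \<in> I" using a b AB forest_subset[OF forest_T] by blast+
  have "lca a b \<subseteq> D" using lca_least[OF D] a b AB(4) by blast
  moreover have "A \<subseteq> lca a b" "B \<subseteq> lca a b"
    using forest_laminar[OF forest_T lca_in_T[OF ab] AB(1)]
      forest_laminar[OF forest_T lca_in_T[OF ab] AB(2)] mem_lca[OF ab] a b AB(3) by blast+
  ultimately show ?thesis using AB(4) by blast
qed

lemma lca_across_children:
  assumes D: "D \<in> T" and AB: "A \<in> T" "B \<in> T" "A \<inter> B = {}" "A \<union> B = D"
    and pq: "p \<in> D" "q \<in> D" "(p \<in> A) \<noteq> (q \<in> A)"
  shows "lca p q = D"
proof (cases "p \<in> A")
  case True
  then show ?thesis using lca_eq_parent[OF D AB True] pq AB(4) by blast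
next
  case False
  have "B \<inter> A = {}" "B \<union> A = D" using AB(3,4) by blast+
  then show ?thesis using lca_eq_parent[OF D AB(2,1)] False pq AB(4) by blast
qed

lemma lca_absorb:
  assumes uvw: "u \<in> I" "v \<in> I" "w \<in> I" and lt: "lca u v \<subset> lca v w"
  shows "lca u w = lca v w"
proof -
  have "lca u w \<subseteq> lca v w"
    using lca_least[OF lca_in_T[OF uvw(2,3)]] mem_lca uvw lt by blast
  moreover have "lca u v \<subseteq> lca u w"
  proof -
    have "lca u w \<subseteq> lca u v \<or> lca u v \<subseteq> lca u w"
      using forest_laminar[OF forest_T lca_in_T[OF uvw(1,3)] lca_in_T[OF uvw(1,2)]] mem_lca uvw
      by blast
    moreover have "\<not> lca u w \<subseteq> lca u v"
      using lca_least[OF lca_in_T[OF uvw(1,2)], of v w] mem_lca uvw lt by blast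
    ultimately show ?thesis by blast
  qed
  then have "lca v w \<subseteq> lca u w"
    using lca_least[OF lca_in_T[OF uvw(1,3)]] mem_lca uvw by blast
  ultimately show ?thesis by blast
qed

lemma lca_ultrametric:
  assumes uvw: "u \<in> I" "v \<in> I" "w \<in> I" and ne: "lca u v \<noteq> lca v w"
  shows "lca u w = lca u v \<or> lca u w = lca v w"
proof -
  have "lca u v \<subset> lca v w \<or> lca v w \<subset> lca u v"
    using forest_laminar[OF forest_T lca_in_T[OF uvw(1,2)] lca_in_T[OF uvw(2,3)]] mem_lca uvw ne
    by blast
  then show ?thesis
    using lca_absorb[OF uvw] lca_absorb[OF uvw(3,2,1)] lca_commute by metis
qed

lemma forest_lca_eq_lca:
  assumes C: "C \<subseteq> I" "inner_cl C" "C \<noteq> {}"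
  obtains x y where "x \<in> C" "y \<in> C" "lca x y = forest_lca T C"
proof -
  obtain a b where ab: "a \<in> C" "b \<in> C" "a \<noteq> b" using inner_clE[OF C(2,3)] .
  note L = forest_lca_T[OF C(3,1)]
  have "inner_cl (forest_lca T C)" using inner_clI[of a _ b] L(2) ab by blast
  then obtain A B where AB: "f_edge T A (forest_lca T C)" "f_edge T B (forest_lca T C)"
    "A \<inter> B = {}" "A \<union> B = forest_lca T C"
    using forest_children[OF forest_T L(1)] by metis
  have "\<not> C \<subseteq> X" if "f_edge T X (forest_lca T C)" for X
    using forest_lca_least[OF f_edgeD(1)[OF that], of C] f_edgeD(3)[OF that] by blast
  then obtain x y where x: "x \<in> C" "x \<notin> B" and y: "y \<in> C" "y \<notin> A"
    using AB(1,2) by blast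
  then have "x \<in> A" "y \<in> B" using L(2) AB(4) by blast+
  then have "lca x y = forest_lca T C"
    using lca_eq_parent[OF L(1) f_edgeD(1)[OF AB(1)] f_edgeD(1)[OF AB(2)] AB(3,4)] by blast
  with x(1) y(1) show ?thesis by (rule that)
qed

text \<open>The clusters of the forest with partition r are the traces of the clusters of T on the
  blocks of r. Validity is forced because two joined pairs with the same lca in T give two inner
  vertices of the forest over the same vertex of T, which must therefore coincide.\<close>

definition lca_valid :: "('a \<times> 'a) set \<Rightarrow> bool" where
  "lca_valid r \<longleftrightarrow> (\<forall>a b c d. (a, b) \<in> r \<longrightarrow> (c, d) \<in> r \<longrightarrow> lca a b = lca c d \<longrightarrow> (a, c) \<in> r)"

definition valid_equivs :: "('a \<times> 'a) set set" where
  "valid_equivs = {r. equiv I r \<and> lca_valid r}"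

definition forest_of :: "('a \<times> 'a) set \<Rightarrow> 'a set set" where
  "forest_of r = {C. \<exists>a D. a \<in> I \<and> D \<in> T \<and> C = r``{a} \<inter> D \<and> C \<noteq> {}}"

lemma lca_validI:
  "(\<And>a b c d. (a, b) \<in> r \<Longrightarrow> (c, d) \<in> r \<Longrightarrow> lca a b = lca c d \<Longrightarrow> (a, c) \<in> r) \<Longrightarrow> lca_valid r"
  unfolding lca_valid_def by blast

lemma lca_validD: "lca_valid r \<Longrightarrow> (a, b) \<in> r \<Longrightarrow> (c, d) \<in> r \<Longrightarrow> lca a b = lca c d \<Longrightarrow> (a, c) \<in> r"
  unfolding lca_valid_def by blast

lemma valid_equivsD: "r \<in> valid_equivs \<Longrightarrow> equiv I r" "r \<in> valid_equivs \<Longrightarrow> lca_valid r"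
  unfolding valid_equivs_def by auto

lemma forest_ofI: "a \<in> I \<Longrightarrow> D \<in> T \<Longrightarrow> r``{a} \<inter> D \<noteq> {} \<Longrightarrow> r``{a} \<inter> D \<in> forest_of r"
  unfolding forest_of_def by blast

lemma forest_ofE:
  assumes "C \<in> forest_of r"
  obtains a D where "a \<in> I" "D \<in> T" "C = r``{a} \<inter> D" "C \<noteq> {}"
  using assms unfolding forest_of_def by blast

lemma forest_of_subset:
  assumes "equiv I r" "C \<in> forest_of r"
  shows "C \<subseteq> I"
proof -
  obtain a D where "C = r``{a} \<inter> D" using forest_ofE[OF assms(2)] by metis
  then show ?thesis using equiv_type[OF assms(1)] by blast
qed

lemma forest_of_cluster_eq:
  assumes r: "equiv I r" and C: "C \<in> forest_of r" and x: "x \<in> C"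
  shows "C = r``{x} \<inter> forest_lca T C"
proof -
  obtain a D where aD: "a \<in> I" "D \<in> T" "C = r``{a} \<inter> D" using forest_ofE[OF C] by blast
  have "forest_lca T C \<subseteq> D" using forest_lca_least[OF aD(2)] aD(3) by blast
  moreover have "r``{x} = r``{a}" using equiv_class_eq_of_mem[OF r] x aD(3) by blast
  ultimately show ?thesis
    using forest_lca_T(2)[of C] forest_of_subset[OF r C] x aD(3) by blast
qed

lemma class_in_forest_of:
  assumes "equiv I r" "a \<in> I"
  shows "r``{a} \<in> forest_of r"
proof -
  have "r``{a} \<inter> I = r``{a}" using equiv_type[OF assms(1)] by blast
  then show ?thesis using forest_ofI[OF assms(2) I_in_T, of r] equiv_class_self[OF assms] by auto
qed

lemma forest_of_binary:
  assumes r: "equiv I r" and C: "C \<in> forest_of r" "inner_cl C"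
  obtains A B where "A \<in> forest_of r" "B \<in> forest_of r" "A \<inter> B = {}" "A \<union> B = C" "A \<noteq> C" "B \<noteq> C"
proof -
  obtain x where x: "x \<in> C" using C(1) by (rule forest_ofE) blast
  have CI: "C \<subseteq> I" using forest_of_subset[OF r C(1)] .
  have C_eq: "C = r``{x} \<inter> forest_lca T C" using forest_of_cluster_eq[OF r C(1) x] .
  have "C \<noteq> {}" using x by blast
  note L = forest_lca_T[OF this CI]
  obtain a b where "a \<in> C" "b \<in> C" "a \<noteq> b" using inner_clE[OF C(2)] x by blast
  then have "inner_cl (forest_lca T C)" using inner_clI[of a _ b] L(2) by blast
  then obtain A B where AB: "A \<in> T" "B \<in> T" "A \<inter> B = {}" "A \<union> B = forest_lca T C"
    "A \<noteq> forest_lca T C" "B \<noteq> forest_lca T C"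
    using forest_binary[OF forest_T L(1)] by metis
  have not_in_child: "\<not> C \<subseteq> A" "\<not> C \<subseteq> B"
    using not_subset_below_forest_lca[OF AB(1)] not_subset_below_forest_lca[OF AB(2)] AB(4-6) by blast+
  then have "r``{x} \<inter> A \<noteq> {}" "r``{x} \<inter> B \<noteq> {}" using C_eq AB(4) by blast+
  moreover have "x \<in> I" using CI x by blast
  ultimately have parts: "r``{x} \<inter> A \<in> forest_of r" "r``{x} \<inter> B \<in> forest_of r"
    using forest_ofI[of x A r] forest_ofI[of x B r] AB(1,2) by auto
  have "(r``{x} \<inter> A) \<inter> (r``{x} \<inter> B) = {}" "(r``{x} \<inter> A) \<union> (r``{x} \<inter> B) = C"
    "r``{x} \<inter> A \<noteq> C" "r``{x} \<inter> B \<noteq> C"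
    using AB(3,4) C_eq not_in_child by blast+
  with parts show ?thesis by (rule that)
qed

lemma forest_forest_of:
  assumes r: "equiv I r"
  shows "forest I (forest_of r)"
  unfolding forest_def
proof (intro conjI ballI impI)
  fix C assume C: "C \<in> forest_of r"
  show "C \<noteq> {}" using C by (rule forest_ofE)
  show "C \<subseteq> I" using forest_of_subset[OF r C] .
next
  fix i assume i: "i \<in> I"
  have "r``{i} \<inter> {i} = {i}" using equiv_class_self[OF r i] by blast
  then show "{i} \<in> forest_of r" using forest_ofI[OF i forest_singleton[OF forest_T i], of r] by simp
next
  fix C D assume C: "C \<in> forest_of r" and D: "D \<in> forest_of r"
  show "C \<subseteq> D \<or> D \<subseteq> C \<or> C \<inter> D = {}"
  proof (cases "C \<inter> D = {}")
    case False
    then obtain x where x: "x \<in> C" "x \<in> D" by blast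
    obtain a E where aE: "a \<in> I" "E \<in> T" "C = r``{a} \<inter> E" using forest_ofE[OF C] by blast
    obtain b E' where bE: "b \<in> I" "E' \<in> T" "D = r``{b} \<inter> E'" using forest_ofE[OF D] by blast
    have "r``{a} = r``{b}" using equiv_class_eq_of_mem[OF r] x aE(3) bE(3) by blast
    moreover have "E \<subseteq> E' \<or> E' \<subseteq> E" using forest_laminar[OF forest_T aE(2) bE(2)] x aE bE by blast
    ultimately show ?thesis using aE(3) bE(3) by blast
  qed simp
next
  fix C assume "C \<in> forest_of r" "inner_cl C"
  then show "\<exists>A\<in>forest_of r. \<exists>B\<in>forest_of r. A \<inter> B = {} \<and> A \<union> B = C \<and> A \<noteq> C \<and> B \<noteq> C"
    by (rule forest_of_binary[OF r]) blast
qed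

lemma forest_of_Id: "forest_of (Id_on I) = forest_bot I"
proof (intro equalityI subsetI)
  fix C assume "C \<in> forest_of (Id_on I)"
  then show "C \<in> forest_bot I" unfolding forest_bot_def by (rule forest_ofE) auto
next
  fix C assume "C \<in> forest_bot I"
  then obtain a where a: "a \<in> I" "C = {a}" unfolding forest_bot_def by blast
  then have "C = Id_on I``{a} \<inter> {a}" by auto
  then show "C \<in> forest_of (Id_on I)"
    using forest_ofI[OF a(1) forest_singleton[OF forest_T a(1)], of "Id_on I"] a by auto
qed

lemma forest_of_top: "forest_of (I \<times> I) = T"
proof (intro equalityI subsetI)
  fix C assume "C \<in> forest_of (I \<times> I)"
  then obtain a D where aD: "a \<in> I" "D \<in> T" "C = (I \<times> I)``{a} \<inter> D" by (rule forest_ofE)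
  then have "C = D" using forest_subset[OF forest_T aD(2)] by auto
  then show "C \<in> T" using aD(2) by simp
next
  fix D assume D: "D \<in> T"
  then obtain a where a: "a \<in> D" using forest_nonempty[OF forest_T] by blast
  have "(I \<times> I)``{a} \<inter> D = D" using forest_subset[OF forest_T D] a by auto
  then show "D \<in> forest_of (I \<times> I)"
    using forest_ofI[OF _ D, of a "I \<times> I"] forest_subset[OF forest_T D] a by auto
qed

lemma f_root_forest_of:
  assumes r: "equiv I r"
  shows "f_root (forest_of r) R \<longleftrightarrow> (\<exists>a\<in>I. R = r``{a})"
proof
  assume R: "f_root (forest_of r) R"
  then have "R \<in> forest_of r" unfolding f_root_def by blast
  then obtain a D where aD: "a \<in> I" "R = r``{a} \<inter> D" by (rule forest_ofE)
  then have "R \<subseteq> r``{a}" by blast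
  then have "R = r``{a}" using R class_in_forest_of[OF r aD(1)] unfolding f_root_def by blast
  then show "\<exists>a\<in>I. R = r``{a}" using aD(1) by blast
next
  assume "\<exists>a\<in>I. R = r``{a}"
  then obtain a where a: "a \<in> I" "R = r``{a}" by blast
  have "E \<subseteq> R" if E: "E \<in> forest_of r" "R \<subseteq> E" for E
  proof -
    obtain b D where bD: "E = r``{b} \<inter> D" using forest_ofE[OF E(1)] by blast
    have "r``{b} = r``{a}"
      using equiv_class_eq_of_mem[OF r] equiv_class_self[OF r a(1)] E(2) a(2) bD by blast
    then show ?thesis using bD a(2) by blast
  qed
  then show "f_root (forest_of r) R" using class_in_forest_of[OF r a(1)] a(2)
    unfolding f_root_def by blast
qed

end

locale tree_refinement = finite_tree +
  fixes r s :: "('a \<times> 'a) set"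
  assumes equiv_r: "equiv I r" and valid_r: "lca_valid r" and equiv_s: "equiv I s"
    and r_subset_s: "r \<subseteq> s"
begin

definition lift :: "'a set \<Rightarrow> 'a set" where
  "lift = forest_lca (forest_of s)"

lemma lift_least: "E \<in> forest_of s \<Longrightarrow> C \<subseteq> E \<Longrightarrow> lift C \<subseteq> E"
  unfolding lift_def by (rule forest_lca_least)

lemma lift_cluster:
  assumes C: "C \<in> forest_of r"
  shows "lift C \<in> forest_of s" "C \<subseteq> lift C"
proof -
  obtain x where x: "x \<in> C" using C by (rule forest_ofE) blast
  have xI: "x \<in> I" using forest_of_subset[OF equiv_r C] x by blast
  have "C \<subseteq> s``{x}" using forest_of_cluster_eq[OF equiv_r C x] r_subset_s by blast
  then show "lift C \<in> forest_of s" "C \<subseteq> lift C"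
    using forest_lca_cluster[OF finite_I forest_forest_of[OF equiv_s] _ class_in_forest_of[OF equiv_s xI]]
      x
    unfolding lift_def by blast+
qed

lemma lift_mono:
  assumes "C' \<in> forest_of r" "C \<subseteq> C'"
  shows "lift C \<subseteq> lift C'"
  using lift_least[OF lift_cluster(1)[OF assms(1)]] lift_cluster(2)[OF assms(1)] assms(2) by blast

lemma lift_subset_class:
  assumes C: "C \<in> forest_of r" and x: "x \<in> C"
  shows "lift C \<subseteq> s``{x} \<inter> forest_lca T C"
proof -
  have CI: "C \<subseteq> I" using forest_of_subset[OF equiv_r C] .
  have xI: "x \<in> I" using CI x by blast
  have L: "forest_lca T C \<in> T" "C \<subseteq> forest_lca T C" using forest_lca_T[OF _ CI] x by blast+
  have "C \<subseteq> s``{x} \<inter> forest_lca T C"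
    using forest_of_cluster_eq[OF equiv_r C x] r_subset_s L(2) by blast
  moreover have "s``{x} \<inter> forest_lca T C \<in> forest_of s"
    using forest_ofI[OF xI L(1), of s] equiv_class_self[OF equiv_s xI] L(2) x by blast
  ultimately show ?thesis using lift_least by blast
qed

lemma forest_lca_lift:
  assumes C: "C \<in> forest_of r"
  shows "forest_lca T (lift C) = forest_lca T C"
proof -
  obtain x where x: "x \<in> C" using C by (rule forest_ofE) blast
  have CI: "C \<subseteq> I" using forest_of_subset[OF equiv_r C] .
  have LI: "lift C \<subseteq> I" using forest_of_subset[OF equiv_s lift_cluster(1)[OF C]] .
  have L: "forest_lca T C \<in> T" using forest_lca_T[OF _ CI] x by blast
  have "forest_lca T (lift C) \<subseteq> forest_lca T C"
    using forest_lca_least[OF L] lift_subset_class[OF C x] by blast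
  moreover have "lift C \<noteq> {}" using lift_cluster(2)[OF C] x by blast
  note L' = forest_lca_T[OF this LI]
  have "forest_lca T C \<subseteq> forest_lca T (lift C)"
    using forest_lca_least[OF L'(1)] L'(2) lift_cluster(2)[OF C] by blast
  ultimately show ?thesis by blast
qed

lemma class_inter_cluster:
  assumes a: "a \<in> I" and E: "E \<in> forest_of s" and ne: "r``{a} \<inter> E \<noteq> {}"
  shows "r``{a} \<inter> E \<in> forest_of r"
proof -
  obtain b D where bD: "D \<in> T" "E = s``{b} \<inter> D" using forest_ofE[OF E] by metis
  obtain y where y: "y \<in> r``{a}" "y \<in> E" using ne by blast
  have "r``{a} \<subseteq> s``{y}"
    using equiv_class_eq_of_mem[OF equiv_r y(1)] r_subset_s by blast
  also have "s``{y} = s``{b}" using equiv_class_eq_of_mem[OF equiv_s] y(2) bD(2) by blast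
  finally have "r``{a} \<inter> E = r``{a} \<inter> D" using bD(2) by blast
  then show ?thesis using forest_ofI[OF a bD(1), of r] ne by simp
qed

lemma class_inter_lift:
  assumes C: "C \<in> forest_of r" and x: "x \<in> C"
  shows "r``{x} \<inter> lift C = C"
  using lift_subset_class[OF C x] forest_of_cluster_eq[OF equiv_r C x] lift_cluster(2)[OF C] x
  by blast

lemma lift_inj_on_inner: "inj_on lift {C \<in> forest_of r. inner_cl C}"
proof (rule inj_onI)
  fix C C' assume C: "C \<in> {C \<in> forest_of r. inner_cl C}" and C': "C' \<in> {C \<in> forest_of r. inner_cl C}"
    and eq: "lift C = lift C'"
  have F: "C \<in> forest_of r" "C' \<in> forest_of r" using C C' by auto
  have I: "C \<subseteq> I" "C' \<subseteq> I" using forest_of_subset[OF equiv_r] F by auto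
  have ne: "C \<noteq> {}" "C' \<noteq> {}" using forest_nonempty[OF forest_forest_of[OF equiv_r]] F by auto
  obtain x y where xy: "x \<in> C" "y \<in> C" "lca x y = forest_lca T C"
    using forest_lca_eq_lca[OF I(1) _ ne(1)] C by auto
  obtain x' y' where xy': "x' \<in> C'" "y' \<in> C'" "lca x' y' = forest_lca T C'"
    using forest_lca_eq_lca[OF I(2) _ ne(2)] C' by auto
  have lcas: "forest_lca T C = forest_lca T C'"
    using forest_lca_lift[OF F(1)] forest_lca_lift[OF F(2)] eq by simp
  have pairs: "(x, y) \<in> r" "(x', y') \<in> r"
    using forest_of_cluster_eq[OF equiv_r F(1) xy(1)] forest_of_cluster_eq[OF equiv_r F(2) xy'(1)]
      xy xy' by blast+
  then have "(x, x') \<in> r" using lca_validD[OF valid_r pairs] xy(3) xy'(3) lcas by simp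
  then have "r``{x} = r``{x'}" using equiv_class_eq[OF equiv_r] by blast
  then show "C = C'"
    using forest_of_cluster_eq[OF equiv_r F(1) xy(1)] forest_of_cluster_eq[OF equiv_r F(2) xy'(1)] lcas
    by simp
qed

context
  fixes R assumes R: "f_root (forest_of r) R"
begin

lemma class_of_root_cluster: "C \<in> forest_of r \<Longrightarrow> C \<subseteq> R \<Longrightarrow> x \<in> C \<Longrightarrow> r``{x} = R"
  using R equiv_class_eq_of_mem[OF equiv_r] unfolding f_root_forest_of[OF equiv_r] by blast

lemma root_inter_lift:
  assumes "C \<in> forest_of r" "C \<subseteq> R"
  shows "R \<inter> lift C = C"
proof -
  obtain x where "x \<in> C" using assms(1) by (rule forest_ofE) blast
  then show ?thesis using class_inter_lift[OF assms(1)] class_of_root_cluster[OF assms] by simp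
qed

lemma root_inter_between_lifts:
  assumes e: "f_edge (forest_of r) C D" "D \<subseteq> R"
    and E: "E \<in> forest_of s" "lift C \<subseteq> E" "E \<subseteq> lift D"
  shows "R \<inter> E = C \<or> R \<inter> E = D"
proof -
  note CD = f_edgeD[OF e(1)]
  obtain a where a: "a \<in> I" "R = r``{a}" using R f_root_forest_of[OF equiv_r] by blast
  have CR: "C \<subseteq> R" using CD(3) e(2) by blast
  have C_sub: "C \<subseteq> R \<inter> E" using CR lift_cluster(2)[OF CD(1)] E(2) by blast
  moreover have "R \<inter> E \<subseteq> D" using root_inter_lift[OF CD(2) e(2)] E(3) by blast
  moreover have "R \<inter> E \<in> forest_of r"
    using class_inter_cluster[OF a(1) E(1)] a(2) C_sub
      forest_nonempty[OF forest_forest_of[OF equiv_r] CD(1)]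
    by blast
  ultimately show ?thesis using CD(4) by blast
qed

lemma path_edge_of_lift:
  assumes e: "f_edge (forest_of r) C D" "D \<subseteq> R"
    and E: "E \<in> path_edges (forest_of s) (lift C) (lift D)"
  shows "R \<inter> E = C"
proof -
  have E': "E \<in> forest_of s" "lift C \<subseteq> E" "E \<subset> lift D" using E unfolding path_edges_def by auto
  have "R \<inter> E \<noteq> D" using lift_least[OF E'(1), of D] E'(3) by blast
  then show ?thesis using root_inter_between_lifts[OF e E'(1,2)] E'(3) by blast
qed

lemma lift_inj_on_root: "inj_on lift {C \<in> forest_of r. C \<subseteq> R}"
proof (rule inj_onI)
  fix C C' assume C: "C \<in> {C \<in> forest_of r. C \<subseteq> R}" and C': "C' \<in> {C \<in> forest_of r. C \<subseteq> R}"
    and eq: "lift C = lift C'"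
  have "C = R \<inter> lift C" using root_inter_lift[of C] C by simp
  also have "\<dots> = C'" using root_inter_lift[of C'] C' eq by simp
  finally show "C = C'" .
qed

lemma lift_not_inside_edge:
  assumes e: "f_edge (forest_of r) C D" "D \<subseteq> R" and C': "C' \<in> forest_of r" "C' \<subseteq> R"
  shows "lift C' \<notin> path_inner (forest_of s) (lift C) (lift D)"
proof
  assume "lift C' \<in> path_inner (forest_of s) (lift C) (lift D)"
  then have between: "lift C \<subset> lift C'" "lift C' \<subset> lift D" "lift C' \<in> forest_of s"
    unfolding path_inner_def by auto
  have "R \<inter> lift C' = C'" using root_inter_lift[OF C'] .
  moreover have "R \<inter> lift C' = C \<or> R \<inter> lift C' = D"
    using root_inter_between_lifts[OF e between(3)] between(1,2) by blast
  ultimately have "C' = C \<or> C' = D" by simp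
  then show False using between by blast
qed

lemma lift_edge_paths_disjoint:
  assumes e: "f_edge (forest_of r) C D" "D \<subseteq> R" and e': "f_edge (forest_of r) C' D'" "D' \<subseteq> R"
    and ne: "(C, D) \<noteq> (C', D')"
  shows "path_edges (forest_of s) (lift C) (lift D) \<inter> path_edges (forest_of s) (lift C') (lift D') = {}"
proof (rule ccontr)
  assume "path_edges (forest_of s) (lift C) (lift D) \<inter> path_edges (forest_of s) (lift C') (lift D') \<noteq> {}"
  then obtain E where E: "E \<in> path_edges (forest_of s) (lift C) (lift D)"
    "E \<in> path_edges (forest_of s) (lift C') (lift D')" by blast
  then have "C = C'" using path_edge_of_lift[OF e E(1)] path_edge_of_lift[OF e' E(2)] by simp
  then show False using f_edge_unique_parent[OF forest_forest_of[OF equiv_r] e(1)] e'(1) ne by blast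
qed

lemma lift_inj_on_tree: "inj_on_tree (forest_of r) (forest_of s) lift R"
  unfolding inj_on_tree_def
proof (intro conjI allI impI)
  fix C D C' D'
  assume "f_edge (forest_of r) C D \<and> f_edge (forest_of r) C' D' \<and> D \<subseteq> R \<and> D' \<subseteq> R \<and> (C, D) \<noteq> (C', D')"
  then show "path_edges (forest_of s) (lift C) (lift D) \<inter> path_edges (forest_of s) (lift C') (lift D') = {}"
    and "path_inner (forest_of s) (lift C) (lift D) \<inter> path_inner (forest_of s) (lift C') (lift D') = {}"
    using lift_edge_paths_disjoint unfolding path_inner_def path_edges_def by blast+
qed (use lift_inj_on_root lift_not_inside_edge in blast)+

end

lemma forest_le_forest_of: "forest_le I (forest_of r) (forest_of s)"
  unfolding forest_le_def
proof (intro conjI exI[of _ lift] allI impI ballI)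
  show "forest I (forest_of r)" "forest I (forest_of s)"
    using forest_forest_of equiv_r equiv_s by auto
  show "lift C \<in> forest_of s" if "C \<in> forest_of r" for C using lift_cluster that by blast
  show "lift C \<subseteq> lift D" if "f_edge (forest_of r) C D" for C D
    using lift_mono[OF f_edgeD(2)[OF that]] f_edgeD(3)[OF that] by blast
  show "inner_cl (lift C)" if C: "C \<in> forest_of r" "inner_cl C" for C
  proof -
    obtain a b where "a \<in> C" "b \<in> C" "a \<noteq> b"
      using inner_clE[OF C(2) forest_nonempty[OF forest_forest_of[OF equiv_r] C(1)]] .
    then show ?thesis using inner_clI[of a "lift C" b] lift_cluster(2)[OF C(1)] by blast
  qed
  show "inj_on lift {C \<in> forest_of r. inner_cl C}" by (rule lift_inj_on_inner)
  show "lift {i} = {i}" if "i \<in> I" for i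
    unfolding lift_def
    by (rule forest_lca_eqI[OF forest_singleton[OF forest_forest_of[OF equiv_s] that]]) auto
  show "inj_on_tree (forest_of r) (forest_of s) lift R" if "f_root (forest_of r) R" for R
    using lift_inj_on_tree[OF that] .
qed

end

context finite_tree
begin

lemma Id_in_valid_equivs: "Id_on I \<in> valid_equivs"
proof -
  have "lca_valid (Id_on I)"
    by (rule lca_validI) (use lca_self in auto)
  then show ?thesis unfolding valid_equivs_def by (auto simp: equiv_def refl_on_def sym_def trans_def)
qed

lemma top_in_valid_equivs: "I \<times> I \<in> valid_equivs"
  unfolding valid_equivs_def lca_valid_def by (auto simp: equiv_def refl_on_def sym_def trans_def)

lemma valid_equivs_bounds: "r \<in> valid_equivs \<Longrightarrow> Id_on I \<subseteq> r \<and> r \<subseteq> I \<times> I"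
  using valid_equivsD(1) unfolding equiv_def refl_on_def by blast

lemma forest_le_forest_of_iff:
  assumes r: "r \<in> valid_equivs" and s: "s \<in> valid_equivs"
  shows "forest_le I (forest_of r) (forest_of s) \<longleftrightarrow> r \<subseteq> s"
proof
  assume le: "forest_le I (forest_of r) (forest_of s)"
  obtain \<phi> where "forest_map I (forest_of r) (forest_of s) \<phi>"
    using forest_le_forest_map[OF finite_I le] by blast
  then interpret forest_map I "forest_of r" "forest_of s" \<phi> .
  have er: "equiv I r" and es: "equiv I s" using valid_equivsD r s by auto
  show "r \<subseteq> s"
  proof (rule subrelI)
    fix a b assume ab: "(a, b) \<in> r"
    have a: "a \<in> I" using ab equiv_type[OF er] by blast
    have K: "r``{a} \<in> forest_of r" using class_in_forest_of[OF er a] .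
    obtain c D where cD: "\<phi> (r``{a}) = s``{c} \<inter> D" using forest_ofE[OF image_in[OF K]] by metis
    have "a \<in> s``{c}" "b \<in> s``{c}" using subset_image[OF K] cD ab equiv_class_self[OF er a] by auto
    then show "(a, b) \<in> s" using equiv_class_eq_of_mem[OF es, of a c] by blast
  qed
next
  assume "r \<subseteq> s"
  then interpret tree_refinement I T r s
    using valid_equivsD r s by unfold_locales auto
  show "forest_le I (forest_of r) (forest_of s)" by (rule forest_le_forest_of)
qed

lemma forest_of_root_rel:
  assumes "forest_map I F T \<phi>"
  shows "forest_of (root_rel F) = F"
proof -
  interpret forest_map I F T \<phi> by fact
  show ?thesis
  proof (intro equalityI subsetI)
    fix C assume "C \<in> forest_of (root_rel F)"
    then obtain a D where aD: "a \<in> I" "D \<in> T" "C = root_rel F``{a} \<inter> D" "C \<noteq> {}"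
      by (rule forest_ofE)
    obtain R where R: "f_root F R" "{a} \<subseteq> R"
      using f_root_exists[OF finite_I forest_F forest_singleton[OF forest_F aD(1)]] .
    have "root_rel F``{a} = R" using root_rel_class[OF forest_F R(1)] R(2) by blast
    then show "C \<in> F" using root_inter_cluster[OF R(1) aD(2)] aD(3,4) by simp
  next
    fix C assume C: "C \<in> F"
    obtain R where R: "f_root F R" "C \<subseteq> R" using f_root_exists[OF finite_I forest_F C] .
    obtain x where x: "x \<in> C" using forest_nonempty[OF forest_F C] by blast
    have "root_rel F``{x} = R" using root_rel_class[OF forest_F R(1)] x R(2) by blast
    then have "C = root_rel F``{x} \<inter> \<phi> C" using root_inter_image[OF R(1) C R(2)] by simp
    moreover have "x \<in> I" using x forest_subset[OF forest_F C] by blast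
    ultimately show "C \<in> forest_of (root_rel F)"
      using forest_ofI[OF _ image_in[OF C], of x "root_rel F"] x by auto
  qed
qed

lemma root_inter_lca:
  assumes "forest_map I F T \<phi>" and R: "f_root F R" "a \<in> R" "b \<in> R" "a \<noteq> b"
  shows "R \<inter> lca a b \<in> F" "inner_cl (R \<inter> lca a b)" "\<phi> (R \<inter> lca a b) = lca a b"
proof -
  interpret forest_map I F T \<phi> by fact
  have ab: "a \<in> I" "b \<in> I" using R forest_subset[OF forest_F] unfolding f_root_def by blast+
  note W = lca_in_T[OF ab] mem_lca[OF ab]
  show X: "R \<inter> lca a b \<in> F" using root_inter_cluster[OF R(1) W(1)] R(2) W(2) by blast
  show "inner_cl (R \<inter> lca a b)" by (rule inner_clI[of a _ b]) (use R W(2) in auto)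
  have "lca a b \<subseteq> E" if "E \<in> T" "R \<inter> lca a b \<subseteq> E" for E
    using lca_least[OF that(1)] that(2) R(2,3) W(2) by blast
  then show "\<phi> (R \<inter> lca a b) = lca a b"
    unfolding image_eq_forest_lca[OF X] by (intro forest_lca_eqI[OF W(1)]) auto
qed

lemma lca_valid_root_rel:
  assumes F: "forest_map I F T \<phi>" and inj: "inj_on \<phi> {C\<in>F. inner_cl C}"
  shows "lca_valid (root_rel F)"
proof -
  interpret forest_map I F T \<phi> by fact
  show ?thesis
  proof (rule lca_validI)
    fix a b c d
    assume ab: "(a, b) \<in> root_rel F" and cd: "(c, d) \<in> root_rel F" and eq: "lca a b = lca c d"
    obtain R where R: "f_root F R" "a \<in> R" "b \<in> R" using ab unfolding root_rel_def by blast
    obtain R' where R': "f_root F R'" "c \<in> R'" "d \<in> R'" using cd unfolding root_rel_def by blast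
    have I: "a \<in> I" "b \<in> I" "c \<in> I" "d \<in> I"
      using R R' forest_subset[OF forest_F] unfolding f_root_def by blast+
    show "(a, c) \<in> root_rel F"
    proof (cases "a = b")
      case True
      then have "c = a" using lca_self[OF I(1)] eq lca_eq_singleton[OF I(3,4)] by simp
      then show ?thesis using R unfolding root_rel_def by blast
    next
      case False
      have "c \<noteq> d" using lca_self[OF I(3)] eq lca_eq_singleton[OF I(1,2)] False by force
      have "R \<inter> lca a b = R' \<inter> lca a b"
        using inj_onD[OF inj] root_inter_lca[OF F R False] root_inter_lca[OF F R' \<open>c \<noteq> d\<close>] eq by simp
      then have "R = R'" using f_roots_disjoint[OF forest_F R(1) R'(1) R(2)] R(2) mem_lca[OF I(1,2)] by blast
      then show ?thesis using R R' unfolding root_rel_def by blast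
    qed
  qed
qed

lemma forest_interval_eq: "forest_interval I T = forest_of ` valid_equivs"
proof (intro equalityI subsetI)
  fix F assume "F \<in> forest_interval I T"
  then obtain \<phi> where \<phi>: "forest_map I F T \<phi>" "inj_on \<phi> {C\<in>F. inner_cl C}"
    using forest_le_forest_map[OF finite_I] unfolding forest_interval_def by blast
  have "root_rel F \<in> valid_equivs"
    using equiv_root_rel[OF finite_I forest_map.forest_F[OF \<phi>(1)]] lca_valid_root_rel[OF \<phi>]
    unfolding valid_equivs_def by blast
  then show "F \<in> forest_of ` valid_equivs" using forest_of_root_rel[OF \<phi>(1)] by force
next
  fix F assume "F \<in> forest_of ` valid_equivs"
  then obtain r where r: "r \<in> valid_equivs" "F = forest_of r" by blast
  then show "F \<in> forest_interval I T"
    using forest_le_forest_of_iff[OF Id_in_valid_equivs r(1)]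
      forest_le_forest_of_iff[OF r(1) top_in_valid_equivs]
      valid_equivs_bounds[OF r(1)] forest_of_Id forest_of_top
    unfolding forest_interval_def by simp
qed

end

section \<open>The lattice of lca-valid partitions\<close>

context finite_tree
begin

lemma finite_valid_equivs: "finite valid_equivs"
proof -
  have "valid_equivs \<subseteq> Pow (I \<times> I)" using valid_equivs_bounds by blast
  then show ?thesis using finite_I finite_subset by blast
qed

lemma Inter_in_valid_equivs:
  assumes \<T>: "\<T> \<subseteq> valid_equivs" "\<T> \<noteq> {}"
  shows "\<Inter>\<T> \<in> valid_equivs"
proof -
  have "equiv I t" "lca_valid t" if "t \<in> \<T>" for t using \<T> that valid_equivsD by auto
  then have "equiv I (\<Inter>\<T>)"
    using \<T>(2) unfolding equiv_def refl_on_def sym_def trans_def by blast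
  moreover have "lca_valid (\<Inter>\<T>)"
    by (rule lca_validI) (use \<open>\<And>t. t \<in> \<T> \<Longrightarrow> lca_valid t\<close> lca_validD in blast)
  ultimately show ?thesis unfolding valid_equivs_def by blast
qed

lemma Int_in_valid_equivs: "r \<in> valid_equivs \<Longrightarrow> s \<in> valid_equivs \<Longrightarrow> r \<inter> s \<in> valid_equivs"
  using Inter_in_valid_equivs[of "{r, s}"] by simp

lemma meet_valid_equivs: "r \<in> valid_equivs \<Longrightarrow> s \<in> valid_equivs \<Longrightarrow> meet valid_equivs (\<subseteq>) r s = r \<inter> s"
  by (rule meet_subset_eqI) (auto simp: is_glb_def intro: Int_in_valid_equivs)

lemma is_lub_valid_equivs:
  assumes "S \<subseteq> valid_equivs"
  shows "is_lub valid_equivs (\<subseteq>) S (\<Inter>{t\<in>valid_equivs. \<Union>S \<subseteq> t})"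
proof -
  have "I \<times> I \<in> {t\<in>valid_equivs. \<Union>S \<subseteq> t}"
    using top_in_valid_equivs valid_equivs_bounds assms by blast
  then have "\<Inter>{t\<in>valid_equivs. \<Union>S \<subseteq> t} \<in> valid_equivs"
    using Inter_in_valid_equivs[of "{t\<in>valid_equivs. \<Union>S \<subseteq> t}"] by blast
  then show ?thesis unfolding is_lub_def by blast
qed

lemma is_lub_Join_valid_equivs:
  assumes "S \<subseteq> valid_equivs"
  shows "is_lub valid_equivs (\<subseteq>) S (Join valid_equivs (\<subseteq>) S)"
  using Join_subset_eqI[OF is_lub_valid_equivs[OF assms]] is_lub_valid_equivs[OF assms] by simp

lemma finite_lattice_valid_equivs: "finite_lattice valid_equivs (\<subseteq>)"
  unfolding finite_lattice_def
proof (intro conjI ballI impI)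
  show "finite valid_equivs" by (rule finite_valid_equivs)
  show "valid_equivs \<noteq> {}" using Id_in_valid_equivs by blast
  fix r s assume "r \<in> valid_equivs" "s \<in> valid_equivs"
  then show "\<exists>z. is_lub valid_equivs (\<subseteq>) {r, s} z" "\<exists>z. is_glb valid_equivs (\<subseteq>) {r, s} z"
    using is_lub_valid_equivs[of "{r, s}"] Int_in_valid_equivs unfolding is_glb_def by blast+
qed auto

lemma Join_valid_equivs:
  assumes S: "S \<subseteq> valid_equivs" and closure: "(Id_on I \<union> \<Union>S)\<^sup>+ \<in> valid_equivs"
  shows "Join valid_equivs (\<subseteq>) S = (Id_on I \<union> \<Union>S)\<^sup>+"
proof (rule Join_subset_eqI)
  have "(Id_on I \<union> \<Union>S)\<^sup>+ \<subseteq> t" if t: "t \<in> valid_equivs" "\<Union>S \<subseteq> t" for t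
  proof (rule trancl_least)
    show "Id_on I \<union> \<Union>S \<subseteq> t" using t valid_equivs_bounds[OF t(1)] by blast
    show "trans t" using valid_equivsD(1)[OF t(1)] unfolding equiv_def by blast
  qed
  then show "is_lub valid_equivs (\<subseteq>) S ((Id_on I \<union> \<Union>S)\<^sup>+)"
    using closure trancl_incr[of "Id_on I \<union> \<Union>S"] unfolding is_lub_def by blast
qed

definition cluster_rel :: "'a set set \<Rightarrow> ('a \<times> 'a) set" where
  "cluster_rel \<S> = Id_on I \<union> (\<Union>D\<in>\<S>. D \<times> D)"

lemma equiv_cluster_rel:
  assumes \<S>: "\<S> \<subseteq> T"
  shows "equiv I (cluster_rel \<S>)"
proof (rule equivI)
  show "cluster_rel \<S> \<subseteq> I \<times> I"
    unfolding cluster_rel_def using \<S> forest_subset[OF forest_T] by blast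
  show "refl_on I (cluster_rel \<S>)" "sym (cluster_rel \<S>)"
    unfolding cluster_rel_def refl_on_def sym_def by blast+
  show "trans (cluster_rel \<S>)"
  proof (rule transI)
    fix a b c assume ab: "(a, b) \<in> cluster_rel \<S>" and bc: "(b, c) \<in> cluster_rel \<S>"
    show "(a, c) \<in> cluster_rel \<S>"
    proof (cases "a = b \<or> b = c")
      case False
      then obtain D D' where D: "D \<in> \<S>" "a \<in> D" "b \<in> D" and D': "D' \<in> \<S>" "b \<in> D'" "c \<in> D'"
        using ab bc unfolding cluster_rel_def by blast
      then have "D \<subseteq> D' \<or> D' \<subseteq> D" using forest_laminar[OF forest_T, of D D'] \<S> by blast
      then show ?thesis unfolding cluster_rel_def using D D' by blast
    qed (use ab bc in blast)
  qed
qed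

lemma cluster_rel_in_valid_equivs:
  assumes \<S>: "\<S> \<subseteq> T"
  shows "cluster_rel \<S> \<in> valid_equivs"
proof -
  have "lca_valid (cluster_rel \<S>)"
  proof (rule lca_validI)
    fix a b c d
    assume ab: "(a, b) \<in> cluster_rel \<S>" and cd: "(c, d) \<in> cluster_rel \<S>" and eq: "lca a b = lca c d"
    have I: "a \<in> I" "c \<in> I" "d \<in> I" using ab cd equiv_type[OF equiv_cluster_rel[OF \<S>]] by blast+
    have c: "c \<in> lca a b" using mem_lca[OF I(2,3)] eq by simp
    show "(a, c) \<in> cluster_rel \<S>"
    proof (cases "a = b")
      case True
      then show ?thesis using c lca_self[OF I(1)] I(1) unfolding cluster_rel_def by auto
    next
      case False
      then obtain D where D: "D \<in> \<S>" "a \<in> D" "b \<in> D" using ab unfolding cluster_rel_def by blast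
      then have "lca a b \<subseteq> D" using lca_least \<S> by blast
      then show ?thesis using D c unfolding cluster_rel_def by blast
    qed
  qed
  then show ?thesis using equiv_cluster_rel[OF \<S>] unfolding valid_equivs_def by blast
qed

text \<open>The hypothesis covers the only configuration not settled by the validity of r: a pair of r
  against a pair (c, d) that only becomes joined through C.\<close>

lemma merge_in_valid_equivs:
  assumes r: "r \<in> valid_equivs" and C: "C \<subseteq> I"
    and cross: "\<And>a b c d u v. (a, b) \<in> r \<Longrightarrow> (c, u) \<in> r \<Longrightarrow> (v, d) \<in> r \<Longrightarrow> u \<in> C \<Longrightarrow> v \<in> C
      \<Longrightarrow> (c, d) \<notin> r \<Longrightarrow> lca a b = lca c d \<Longrightarrow> (a, c) \<in> merge r C"
  shows "merge r C \<in> valid_equivs"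
proof -
  have er: "equiv I r" using valid_equivsD(1)[OF r] .
  have em: "equiv I (merge r C)" using equiv_merge[OF er C] .
  have "lca_valid (merge r C)"
  proof (rule lca_validI)
    fix a b c d
    assume ab: "(a, b) \<in> merge r C" and cd: "(c, d) \<in> merge r C" and eq: "lca a b = lca c d"
    show "(a, c) \<in> merge r C"
    proof (cases "(a, b) \<in> r"; cases "(c, d) \<in> r")
      assume "(a, b) \<in> r" "(c, d) \<in> r"
      then show ?thesis using lca_validD[OF valid_equivsD(2)[OF r] _ _ eq] unfolding merge_def by blast
    next
      assume "(a, b) \<in> r" "(c, d) \<notin> r"
      then show ?thesis using cd cross[of a b c _ _ d] eq unfolding merge_def by blast
    next
      assume "(a, b) \<notin> r" "(c, d) \<in> r"
      then have "(c, a) \<in> merge r C" using ab cross[of c d a _ _ b] eq unfolding merge_def by blast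
      then show ?thesis using equiv_symD[OF em] by blast
    next
      assume "(a, b) \<notin> r" "(c, d) \<notin> r"
      then show ?thesis using ab cd equiv_symD[OF er] unfolding merge_def by blast
    qed
  qed
  then show ?thesis using em unfolding valid_equivs_def by blast
qed

lemma lca_across_disjoint:
  assumes W: "W \<in> T" and C: "C \<in> T" and disj: "W \<inter> C = {}" and p: "p \<in> W" and w: "w \<in> C"
  shows "lca p w = forest_lca T (W \<union> C)"
proof -
  have pw: "p \<in> I" "w \<in> I" using p w W C forest_subset[OF forest_T] by blast+
  note L = lca_in_T[OF pw] mem_lca[OF pw]
  have "W \<subseteq> lca p w" using forest_laminar[OF forest_T L(1) W] L(2) p w disj by blast
  moreover have "C \<subseteq> lca p w" using forest_laminar[OF forest_T L(1) C] L(2) p w disj by blast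
  moreover have "lca p w \<subseteq> E" if "E \<in> T" "W \<union> C \<subseteq> E" for E
    using lca_least[OF that(1)] that(2) p w by blast
  ultimately show ?thesis by (intro forest_lca_eqI[symmetric] L(1)) auto
qed

lemma merge_cluster_cross_in_child:
  assumes r: "r \<in> valid_equivs"
    and ab: "(a, b) \<in> r" and cu: "(c, u) \<in> r" and vd: "(v, d) \<in> r" and uv: "u \<in> C" "v \<in> C"
    and eq: "lca a b = lca c d"
    and X: "f_edge T X (lca c d)" and Y: "f_edge T Y (lca c d)"
    and XY: "X \<inter> Y = {}" "X \<union> Y = lca c d" and CX: "C \<subseteq> X"
  shows "(a, c) \<in> merge r C"
proof -
  have er: "equiv I r" and vr: "lca_valid r" using valid_equivsD r by auto
  have cd: "c \<in> I" "d \<in> I" using cu vd equiv_type[OF er] by blast+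
  have split: "lca p q = lca c d" if "p \<in> X" "q \<in> Y" for p q
    using lca_eq_parent[OF lca_in_T[OF cd] f_edgeD(1)[OF X] f_edgeD(1)[OF Y] XY that] .
  have "\<not> (c \<in> X \<and> d \<in> X)" using lca_least[OF f_edgeD(1)[OF X], of c d] f_edgeD(3)[OF X] by blast
  then consider "c \<in> Y" | "d \<in> Y" using mem_lca[OF cd] XY(2) by blast
  then show ?thesis
  proof cases
    case 1
    then have "lca u c = lca c d" using split[of u c] CX uv(1) by blast
    then have "lca c u = lca a b" using lca_commute[of c u] eq by simp
    then have "(c, a) \<in> r" using lca_validD[OF vr cu ab] by simp
    then show ?thesis using equiv_symD[OF er] unfolding merge_def by blast
  next
    case 2
    then have "lca v d = lca c d" using split[of v d] CX uv(2) by blast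
    then have "lca a b = lca v d" using eq by simp
    then have "(a, v) \<in> r" using lca_validD[OF vr ab vd] by simp
    then show ?thesis using equiv_symD[OF er cu] uv unfolding merge_def by blast
  qed
qed

lemma merge_cluster_cross:
  assumes r: "r \<in> valid_equivs" and C: "C \<in> T"
    and ab: "(a, b) \<in> r" and cu: "(c, u) \<in> r" and vd: "(v, d) \<in> r" and uv: "u \<in> C" "v \<in> C"
    and ncd: "(c, d) \<notin> r" and eq: "lca a b = lca c d"
  shows "(a, c) \<in> merge r C"
proof -
  have er: "equiv I r" and vr: "lca_valid r" using valid_equivsD r by auto
  have I: "a \<in> I" "b \<in> I" "c \<in> I" "d \<in> I" using ab cu vd equiv_type[OF er] by blast+
  define W where "W = lca c d"
  have W: "W \<in> T" "c \<in> W" "d \<in> W" "a \<in> W"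
    using lca_in_T[OF I(3,4)] mem_lca[OF I(3,4)] mem_lca[OF I(1,2)] eq unfolding W_def by auto
  consider (disjoint) "W \<inter> C = {}" | (inside) "W \<subseteq> C" | (around) "C \<subset> W"
    using forest_laminar[OF forest_T W(1) C] by blast
  then show ?thesis
  proof cases
    case disjoint
    then have "lca c u = lca d v" using lca_across_disjoint[OF W(1) C disjoint] W(2,3) uv by simp
    then have "(c, d) \<in> r" using lca_validD[OF vr cu equiv_symD[OF er vd]] by simp
    then show ?thesis using ncd by blast
  next
    case inside
    then show ?thesis
      using W(4) equiv_reflD[OF er I(1)] equiv_symD[OF er cu] uv(1) unfolding merge_def by blast
  next
    case around
    have "c \<noteq> d" using ncd equiv_reflD[OF er I(3)] by blast
    then have "inner_cl W" using inner_clI[OF W(2,3)] by blast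
    then obtain K K' where KK: "f_edge T K W" "f_edge T K' W" "K \<inter> K' = {}" "K \<union> K' = W"
      using forest_children[OF forest_T W(1)] by metis
    have "C \<subseteq> K \<or> C \<subseteq> K'"
      using forest_subcluster_in_child[OF forest_T f_edgeD(1)[OF KK(1)] f_edgeD(1)[OF KK(2)]
          KK(3,4) C around] .
    moreover have "K' \<inter> K = {}" "K' \<union> K = W" using KK(3,4) by blast+
    ultimately show ?thesis
      using merge_cluster_cross_in_child[OF r ab cu vd uv eq, of K K']
        merge_cluster_cross_in_child[OF r ab cu vd uv eq, of K' K] KK
      unfolding W_def by blast
  qed
qed

lemma trancl_clusters_in_valid_equivs:
  assumes y: "y \<in> valid_equivs" and \<S>: "finite \<S>" "\<S> \<subseteq> T"
  shows "(y \<union> (\<Union>D\<in>\<S>. D \<times> D))\<^sup>+ \<in> valid_equivs"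
  using \<S>
proof (induction \<S> rule: finite_induct)
  case empty
  have "trans y" using valid_equivsD(1)[OF y] unfolding equiv_def by blast
  then show ?case using y by simp
next
  case (insert C \<S>)
  let ?r = "(y \<union> (\<Union>D\<in>\<S>. D \<times> D))\<^sup>+"
  have r: "?r \<in> valid_equivs" using insert by blast
  have C: "C \<in> T" "C \<subseteq> I" using insert forest_subset[OF forest_T] by blast+
  have "y \<union> (\<Union>D\<in>insert C \<S>. D \<times> D) = (y \<union> (\<Union>D\<in>\<S>. D \<times> D)) \<union> C \<times> C" by blast
  then have "(y \<union> (\<Union>D\<in>insert C \<S>. D \<times> D))\<^sup>+ = (?r \<union> C \<times> C)\<^sup>+" by (simp add: trancl_trancl_Un)
  also have "\<dots> = merge ?r C" using merge_eq_trancl[OF valid_equivsD(1)[OF r] C(2)] .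
  finally show ?case
    using merge_in_valid_equivs[OF r C(2) merge_cluster_cross[OF r C(1)]] by simp
qed

lemma trancl_cluster_rel_in_valid_equivs:
  assumes y: "y \<in> valid_equivs" and \<S>: "finite \<S>" "\<S> \<subseteq> T"
  shows "(y \<union> cluster_rel \<S>)\<^sup>+ \<in> valid_equivs"
proof -
  have "y \<union> cluster_rel \<S> = y \<union> (\<Union>D\<in>\<S>. D \<times> D)"
    using valid_equivs_bounds[OF y] unfolding cluster_rel_def by blast
  then show ?thesis using trancl_clusters_in_valid_equivs[OF y \<S>] by simp
qed

lemma join_cluster_rel:
  assumes y: "y \<in> valid_equivs" and \<S>: "finite \<S>" "\<S> \<subseteq> T"
  shows "join valid_equivs (\<subseteq>) y (cluster_rel \<S>) = (y \<union> cluster_rel \<S>)\<^sup>+"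
proof -
  have "Id_on I \<union> \<Union>{y, cluster_rel \<S>} = y \<union> cluster_rel \<S>"
    using valid_equivs_bounds[OF y] unfolding cluster_rel_def by blast
  then show ?thesis
    using Join_valid_equivs[of "{y, cluster_rel \<S>}"] y cluster_rel_in_valid_equivs[OF \<S>(2)]
      trancl_cluster_rel_in_valid_equivs[OF y \<S>] unfolding join_def by simp
qed

section \<open>Left modularity of the cluster relations\<close>

lemma crossing_step:
  assumes \<S>: "\<S> \<subseteq> T" and D: "D \<in> T" "\<forall>S\<in>\<S>. \<not> D \<subseteq> S"
    and AB: "A \<in> T" "B \<in> T" "A \<inter> B = {}" "A \<union> B = D"
    and pq: "p \<in> D" "q \<in> D" "(p \<in> A) \<noteq> (q \<in> A)" and step: "(p, q) \<in> \<tau> \<union> cluster_rel \<S>"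
  shows "(p, q) \<in> \<tau> \<and> lca p q = D"
proof -
  have lca: "lca p q = D" using lca_across_children[OF D(1) AB pq] .
  have "(p, q) \<in> \<tau>"
  proof (rule ccontr)
    assume "(p, q) \<notin> \<tau>"
    moreover have "p \<noteq> q" using pq(3) by blast
    ultimately obtain S where S: "S \<in> \<S>" "p \<in> S" "q \<in> S"
      using step unfolding cluster_rel_def by blast
    then have "lca p q \<subseteq> S" using lca_least \<S> by blast
    then show False using lca D(2) S(1) by simp
  qed
  with lca show ?thesis by blast
qed

lemma walk_top_split:
  assumes \<S>: "\<S> \<subseteq> T" and \<tau>: "\<tau> \<subseteq> I \<times> I" and f: "walk (\<tau> \<union> cluster_rel \<S>) f n" "f 0 \<in> I"
    and ends: "(f 0, f n) \<notin> cluster_rel \<S>"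
  obtains D A B where "D \<in> T" "f ` {..n} \<subseteq> D" "\<forall>S\<in>\<S>. \<not> D \<subseteq> S"
    "A \<in> T" "B \<in> T" "A \<inter> B = {}" "A \<union> B = D" "\<not> f ` {..n} \<subseteq> A" "\<not> f ` {..n} \<subseteq> B"
proof -
  have "\<tau> \<union> cluster_rel \<S> \<subseteq> I \<times> I"
    using \<tau> cluster_rel_in_valid_equivs[OF \<S>] valid_equivs_bounds by blast
  then have pts: "f ` {..n} \<subseteq> I" using walk_points_subset[OF f(1)] f(2) by blast
  define D where "D = forest_lca T (f ` {..n})"
  have "f ` {..n} \<noteq> {}" by blast
  note D = forest_lca_T[OF this pts, folded D_def]
  have "(f 0, f 0) \<in> cluster_rel \<S>" using f(2) unfolding cluster_rel_def by blast
  then have "f 0 \<noteq> f n" using ends by auto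
  moreover have "f 0 \<in> D" "f n \<in> D" using D(2) by auto
  ultimately have "inner_cl D" using inner_clI[of "f 0" D "f n"] by blast
  then obtain A B where AB: "f_edge T A D" "f_edge T B D" "A \<inter> B = {}" "A \<union> B = D"
    using forest_children[OF forest_T D(1)] by metis
  have AB_T: "A \<in> T" "B \<in> T" using f_edgeD(1) AB(1,2) by auto
  have no_cluster: "\<forall>S\<in>\<S>. \<not> D \<subseteq> S" using ends D(2) unfolding cluster_rel_def by fastforce
  have out: "\<not> f ` {..n} \<subseteq> A" "\<not> f ` {..n} \<subseteq> B"
    using not_subset_below_forest_lca[OF AB_T(1)] not_subset_below_forest_lca[OF AB_T(2)]
      f_edgeD(3)[OF AB(1)] f_edgeD(3)[OF AB(2)] unfolding D_def by blast+
  show ?thesis by (rule that[OF D no_cluster AB_T AB(3,4) out])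
qed

text \<open>The least cluster D containing the walk is not contained in any of the clusters, so the
  walk can only cross the top split of D by steps of \<tau>, whose lca is D.\<close>

lemma walk_lca_steps:
  assumes \<S>: "\<S> \<subseteq> T" and \<tau>: "\<tau> \<subseteq> I \<times> I" and f: "walk (\<tau> \<union> cluster_rel \<S>) f n" "f 0 \<in> I"
    and ends: "(f 0, f n) \<notin> cluster_rel \<S>"
  shows "(\<exists>l<n. (f l, f (Suc l)) \<in> \<tau> \<and> lca (f l) (f (Suc l)) = lca (f 0) (f n))
    \<or> (\<exists>l1 l2. l1 < l2 \<and> l2 < n \<and> (f l1, f (Suc l1)) \<in> \<tau> \<and> (f l2, f (Suc l2)) \<in> \<tau>
         \<and> lca (f l1) (f (Suc l1)) = lca (f l2) (f (Suc l2)))"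
proof -
  obtain D A B where D: "D \<in> T" "f ` {..n} \<subseteq> D" "\<forall>S\<in>\<S>. \<not> D \<subseteq> S"
    and AB: "A \<in> T" "B \<in> T" "A \<inter> B = {}" "A \<union> B = D" and out: "\<not> f ` {..n} \<subseteq> A" "\<not> f ` {..n} \<subseteq> B"
    using walk_top_split[OF assms] .
  define side where "side l \<longleftrightarrow> f l \<in> A" for l
  have cross: "(f l, f (Suc l)) \<in> \<tau> \<and> lca (f l) (f (Suc l)) = D"
    if l: "l < n" "side l \<noteq> side (Suc l)" for l
  proof -
    have "f l \<in> D" "f (Suc l) \<in> D" using D(2) l(1) by auto
    moreover have "(f l, f (Suc l)) \<in> \<tau> \<union> cluster_rel \<S>" using f(1) l(1) unfolding walk_def by blast
    ultimately show ?thesis using crossing_step[OF \<S> D(1,3) AB] l(2) unfolding side_def by blast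
  qed
  show ?thesis
  proof (cases "side 0 = side n")
    case False
    then obtain l where "l < n" "side l \<noteq> side (Suc l)" using exists_change[of side 0 n] by blast
    moreover have "lca (f 0) (f n) = D"
      using lca_across_children[OF D(1) AB] D(2) False unfolding side_def by auto
    ultimately show ?thesis using cross by blast
  next
    case True
    obtain m where "m \<le> n" "side m \<noteq> side 0"
    proof (cases "side 0")
      case True
      then show ?thesis using out(1) that unfolding side_def by auto
    next
      case False
      then show ?thesis using out(2) that D(2) AB(4) unfolding side_def by auto
    qed
    then obtain l1 l2 where l: "l1 < l2" "l2 < n" "side l1 \<noteq> side (Suc l1)" "side l2 \<noteq> side (Suc l2)"
      using exists_two_changes[OF True] by blast
    then have "(f l1, f (Suc l1)) \<in> \<tau>" "(f l2, f (Suc l2)) \<in> \<tau>"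
      "lca (f l1) (f (Suc l1)) = lca (f l2) (f (Suc l2))"
      using cross[of l1] cross[of l2] by auto
    with l(1,2) show ?thesis by blast
  qed
qed

lemma walk_ends_in_tau:
  assumes \<tau>: "equiv I \<tau>" and z: "z \<in> valid_equivs" and \<tau>z: "\<tau> \<subseteq> z" and \<S>: "\<S> \<subseteq> T"
    and xz: "cluster_rel \<S> \<inter> z \<subseteq> \<tau>"
  shows "walk (\<tau> \<union> cluster_rel \<S>) f n \<Longrightarrow> (f 0, f n) \<in> z \<Longrightarrow> (f 0, f n) \<in> \<tau>"
proof (induction n arbitrary: f rule: less_induct)
  case (less n)
  have ez: "equiv I z" and vz: "lca_valid z" using valid_equivsD z by auto
  note walk = less.prems(1) and ends_z = less.prems(2)
  show ?case
  proof (cases "(f 0, f n) \<in> cluster_rel \<S>")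
    case True
    with ends_z xz show ?thesis by blast
  next
    case False
    have segment: "(f i, f j) \<in> \<tau>" if "i \<le> j" "j \<le> n" "j - i < n" "(f i, f j) \<in> z" for i j
      using less.IH[of "j - i" "\<lambda>t. f (t + i)"] walk_segment[OF walk that(2), of i] that by simp
    have "f 0 \<in> I" using ends_z equiv_type[OF ez] by blast
    from walk_lca_steps[OF \<S> equiv_type[OF \<tau>] walk this False]
    consider (single) l where "l < n" "(f l, f (Suc l)) \<in> \<tau>" "lca (f l) (f (Suc l)) = lca (f 0) (f n)"
      | (double) l1 l2 where "l1 < l2" "l2 < n" "(f l1, f (Suc l1)) \<in> \<tau>" "(f l2, f (Suc l2)) \<in> \<tau>"
          "lca (f l1) (f (Suc l1)) = lca (f l2) (f (Suc l2))"
      by blast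
    then show ?thesis
    proof cases
      case single
      have left_z: "(f 0, f l) \<in> z" using lca_validD[OF vz ends_z] single(2,3) \<tau>z by auto
      then have left: "(f 0, f l) \<in> \<tau>" using segment[of 0 l] single(1) by simp
      have "(f (Suc l), f n) \<in> z"
        using equiv_transD[OF ez] equiv_symD[OF ez] single(2) \<tau>z left_z ends_z by blast
      then have right: "(f (Suc l), f n) \<in> \<tau>" using segment[of "Suc l" n] single(1) by simp
      show ?thesis using equiv_transD[OF \<tau> left] equiv_transD[OF \<tau> single(2) right] by blast
    next
      case double
      have "(f l1, f l2) \<in> z" using lca_validD[OF vz _ _ double(5)] double(3,4) \<tau>z by blast
      then have "(f (Suc l1), f l2) \<in> z"
        using equiv_transD[OF ez] equiv_symD[OF ez] double(3) \<tau>z by blast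
      then have "(f (Suc l1), f l2) \<in> \<tau>" using segment[of "Suc l1" l2] double(1,2) by simp
      then have jump: "(f l1, f (Suc l2)) \<in> \<tau> \<union> cluster_rel \<S>"
        using equiv_transD[OF \<tau> double(3)] equiv_transD[OF \<tau> _ double(4)] by blast
      obtain g m where "walk (\<tau> \<union> cluster_rel \<S>) g m" "m < n" "g 0 = f 0" "g m = f n"
        using walk_shortcut[OF walk _ _ jump] double(1,2) by auto
      then show ?thesis using less.IH ends_z by metis
    qed
  qed
qed

lemma trancl_cluster_rel_Int_subset:
  assumes "equiv I \<tau>" "z \<in> valid_equivs" "\<tau> \<subseteq> z" "\<S> \<subseteq> T" "cluster_rel \<S> \<inter> z \<subseteq> \<tau>"
  shows "(\<tau> \<union> cluster_rel \<S>)\<^sup>+ \<inter> z \<subseteq> \<tau>"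
proof (rule subrelI)
  fix a b assume "(a, b) \<in> (\<tau> \<union> cluster_rel \<S>)\<^sup>+ \<inter> z"
  then obtain f n where "walk (\<tau> \<union> cluster_rel \<S>) f n" "f 0 = a" "f n = b" "(a, b) \<in> z"
    using trancl_walk by (metis IntD1 IntD2)
  then show "(a, b) \<in> \<tau>" using walk_ends_in_tau[OF assms] by blast
qed

lemma left_modular_cluster_rel:
  assumes \<S>: "finite \<S>" "\<S> \<subseteq> T"
  shows "left_modular valid_equivs (\<subseteq>) (cluster_rel \<S>)"
  unfolding left_modular_def
proof (intro ballI impI)
  fix y z assume y: "y \<in> valid_equivs" and z: "z \<in> valid_equivs" and yz: "y \<subseteq> z"
  let ?x = "cluster_rel \<S>"
  have x: "?x \<in> valid_equivs" using cluster_rel_in_valid_equivs[OF \<S>(2)] .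
  have xz: "?x \<inter> z \<in> valid_equivs" using Int_in_valid_equivs[OF x z] .
  define J where "J = join valid_equivs (\<subseteq>) y (?x \<inter> z)"
  have lub: "is_lub valid_equivs (\<subseteq>) {y, ?x \<inter> z} J"
    using is_lub_Join_valid_equivs[of "{y, ?x \<inter> z}"] y xz unfolding J_def join_def by blast
  then have J: "J \<in> valid_equivs" "y \<subseteq> J" "?x \<inter> z \<subseteq> J" "J \<subseteq> z"
    using z yz unfolding is_lub_def by auto
  have yx: "(y \<union> ?x)\<^sup>+ \<in> valid_equivs" using trancl_cluster_rel_in_valid_equivs[OF y \<S>] .
  have "J \<subseteq> (y \<union> ?x)\<^sup>+" using lub yx trancl_incr[of "y \<union> ?x"] unfolding is_lub_def by blast
  moreover have "(y \<union> ?x)\<^sup>+ \<inter> z \<subseteq> J"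
  proof -
    have "(y \<union> ?x)\<^sup>+ \<subseteq> (J \<union> ?x)\<^sup>+" using J(2) by (intro trancl_mono_subset) blast
    then show ?thesis
      using trancl_cluster_rel_Int_subset[OF valid_equivsD(1)[OF J(1)] z J(4) \<S>(2) J(3)] by blast
  qed
  ultimately have "J = (y \<union> ?x)\<^sup>+ \<inter> z" using J(4) by blast
  then show "join valid_equivs (\<subseteq>) y (meet valid_equivs (\<subseteq>) ?x z)
    = meet valid_equivs (\<subseteq>) (join valid_equivs (\<subseteq>) y ?x) z"
    using meet_valid_equivs[OF x z] meet_valid_equivs[OF yx z] join_cluster_rel[OF y \<S>] J_def by simp
qed

end

section \<open>The maximal chain and the level condition\<close>

context finite_tree
begin

text \<open>Sorting by size puts every inner cluster after its children, so adding the inner clusters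
  in this order gives a maximal chain.\<close>

definition inner_clusters :: "'a set list" where
  "inner_clusters = sort_key card (SOME xs. set xs = {D\<in>T. inner_cl D} \<and> distinct xs)"

lemma inner_clusters:
  "set inner_clusters = {D\<in>T. inner_cl D}" "distinct inner_clusters" "sorted (map card inner_clusters)"
proof -
  have "finite {D\<in>T. inner_cl D}" using finite_forest[OF finite_I forest_T] by simp
  then have "\<exists>xs. set xs = {D\<in>T. inner_cl D} \<and> distinct xs" using finite_distinct_list by blast
  then have "set (SOME xs. set xs = {D\<in>T. inner_cl D} \<and> distinct xs) = {D\<in>T. inner_cl D}
      \<and> distinct (SOME xs. set xs = {D\<in>T. inner_cl D} \<and> distinct xs)"
    by (rule someI_ex)
  then show "set inner_clusters = {D\<in>T. inner_cl D}" "distinct inner_clusters"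
    "sorted (map card inner_clusters)"
    unfolding inner_clusters_def by simp_all
qed

definition cluster_chain :: "nat \<Rightarrow> ('a \<times> 'a) set" where
  "cluster_chain i = cluster_rel (set (take i inner_clusters))"

lemma set_take_inner_clusters: "set (take i inner_clusters) \<subseteq> T"
  using inner_clusters(1) set_take_subset[of i inner_clusters] by blast

lemma cluster_chain_in_valid_equivs: "cluster_chain i \<in> valid_equivs"
  unfolding cluster_chain_def using cluster_rel_in_valid_equivs[OF set_take_inner_clusters] .

lemma left_modular_cluster_chain: "left_modular valid_equivs (\<subseteq>) (cluster_chain i)"
  unfolding cluster_chain_def using left_modular_cluster_rel[OF _ set_take_inner_clusters] by simp

lemma mem_cluster_chain_iff:
  assumes "p \<in> I" "q \<in> I" "p \<noteq> q"
  shows "(p, q) \<in> cluster_chain i \<longleftrightarrow> (\<exists>E\<in>set (take i inner_clusters). lca p q \<subseteq> E)"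
proof
  assume "(p, q) \<in> cluster_chain i"
  then obtain E where E: "E \<in> set (take i inner_clusters)" "p \<in> E" "q \<in> E"
    using assms(3) unfolding cluster_chain_def cluster_rel_def by blast
  then have "lca p q \<subseteq> E" using lca_least[OF _ E(2,3)] set_take_inner_clusters by blast
  then show "\<exists>E\<in>set (take i inner_clusters). lca p q \<subseteq> E" using E(1) by blast
next
  assume "\<exists>E\<in>set (take i inner_clusters). lca p q \<subseteq> E"
  then show "(p, q) \<in> cluster_chain i"
    using mem_lca[OF assms(1,2)] unfolding cluster_chain_def cluster_rel_def by blast
qed

lemma smaller_inner_cluster_taken:
  assumes i: "i < length inner_clusters" and X: "X \<in> T" "inner_cl X" "X \<subset> inner_clusters ! i"
  shows "X \<in> set (take i inner_clusters)"
proof -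
  obtain j where j: "j < length inner_clusters" "inner_clusters ! j = X"
    using X(1,2) inner_clusters(1) by (metis (mono_tags, lifting) in_set_conv_nth mem_Collect_eq)
  have "inner_clusters ! i \<in> T" using nth_mem[OF i] inner_clusters(1) by blast
  then have "finite (inner_clusters ! i)" by (rule finite_cluster)
  then have "card X < card (inner_clusters ! i)" using X(3) psubset_card_mono by blast
  then have "\<not> i \<le> j" using sorted_nth_mono[OF inner_clusters(3), of i j] i j by auto
  then have "j < i" by simp
  then show ?thesis using j by (metis in_set_conv_nth length_take min_less_iff_conj nth_take)
qed

lemma no_superset_taken:
  assumes i: "i < length inner_clusters" and E: "E \<in> set (take i inner_clusters)"
  shows "\<not> inner_clusters ! i \<subseteq> E"
proof
  assume sub: "inner_clusters ! i \<subseteq> E"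
  obtain j where j: "j < i" "inner_clusters ! j = E"
    using E i by (auto simp: in_set_conv_nth)
  have "finite E" using E set_take_inner_clusters finite_cluster by blast
  moreover have "card E \<le> card (inner_clusters ! i)"
    using sorted_nth_mono[OF inner_clusters(3), of j i] i j by simp
  ultimately have "inner_clusters ! i = E" using sub card_seteq by blast
  then show False using nth_eq_iff_index_eq[OF inner_clusters(2)] i j by fastforce
qed

lemma cluster_chain_Suc:
  "i < length inner_clusters
    \<Longrightarrow> cluster_chain (Suc i) = cluster_chain i \<union> (inner_clusters ! i) \<times> (inner_clusters ! i)"
  unfolding cluster_chain_def cluster_rel_def by (auto simp: take_Suc_conv_app_nth)

lemma child_square_in_cluster_chain:
  assumes i: "i < length inner_clusters" and X: "f_edge T X (inner_clusters ! i)"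
  shows "X \<times> X \<subseteq> cluster_chain i"
proof (cases "inner_cl X")
  case True
  then have "X \<in> set (take i inner_clusters)"
    using smaller_inner_cluster_taken[OF i f_edgeD(1)[OF X]] f_edgeD(3)[OF X] by blast
  then show ?thesis unfolding cluster_chain_def cluster_rel_def by blast
next
  case False
  then obtain x where "X = {x}" unfolding inner_cl_def by blast
  then show ?thesis
    using forest_subset[OF forest_T f_edgeD(1)[OF X]] unfolding cluster_chain_def cluster_rel_def by auto
qed

lemma covers_cluster_chain:
  assumes i: "i < length inner_clusters"
  shows "covers valid_equivs (\<subseteq>) (cluster_chain i) (cluster_chain (Suc i))"
proof -
  define D where "D = inner_clusters ! i"
  have D: "D \<in> T" "inner_cl D" using nth_mem[OF i] inner_clusters(1) unfolding D_def by auto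
  have Suc: "cluster_chain (Suc i) = cluster_chain i \<union> D \<times> D" using cluster_chain_Suc[OF i] D_def by simp
  obtain A B where AB: "f_edge T A D" "f_edge T B D" "A \<inter> B = {}" "A \<union> B = D"
    using forest_children[OF forest_T D] by metis
  have AB_T: "A \<in> T" "B \<in> T" using f_edgeD(1) AB(1,2) by auto
  have square: "A \<times> A \<subseteq> cluster_chain i" "B \<times> B \<subseteq> cluster_chain i"
    using child_square_in_cluster_chain[OF i] AB(1,2) D_def by auto
  have cross: "(p, q) \<notin> cluster_chain i" if "p \<in> A" "q \<in> B" for p q
  proof -
    have pq: "p \<in> I" "q \<in> I" "p \<noteq> q" using that AB_T AB(3) forest_subset[OF forest_T] by blast+
    have "lca p q = D" using lca_eq_parent[OF D(1) AB_T AB(3,4) that] .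
    then show ?thesis using mem_cluster_chain_iff[OF pq] no_superset_taken[OF i] D_def by simp
  qed
  obtain p q where pq: "p \<in> A" "q \<in> B" using forest_nonempty[OF forest_T] AB_T by blast
  have "z = cluster_chain (Suc i)"
    if z: "z \<in> valid_equivs" "cluster_chain i \<subseteq> z" "z \<subseteq> cluster_chain (Suc i)" "z \<noteq> cluster_chain i" for z
  proof -
    note ez = valid_equivsD(1)[OF z(1)]
    have "\<not> z \<subseteq> cluster_chain i" using z(2,4) by blast
    then obtain a b where ab: "(a, b) \<in> z" "(a, b) \<notin> cluster_chain i" by auto
    then have "a \<in> D" "b \<in> D" using z(3) Suc by blast+
    then have "(a \<in> A \<and> b \<in> B) \<or> (b \<in> A \<and> a \<in> B)" using ab(2) square AB(4) by blast
    moreover have sq: "A \<times> A \<subseteq> z" "B \<times> B \<subseteq> z" using square z(2) by auto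
    ultimately have "D \<times> D \<subseteq> z"
      using equiv_square_union[OF ez sq ab(1)] equiv_square_union[OF ez sq equiv_symD[OF ez ab(1)]] AB(4)
      by blast
    then show ?thesis using z(2,3) Suc by blast
  qed
  then show ?thesis
    unfolding covers_def using cluster_chain_in_valid_equivs Suc cross[OF pq] pq AB(4) by blast
qed

lemma maximal_chain_cluster_chain: "maximal_chain valid_equivs (\<subseteq>) cluster_chain (length inner_clusters)"
  unfolding maximal_chain_def
proof (intro conjI allI impI ballI)
  fix r assume r: "r \<in> valid_equivs"
  have "cluster_chain 0 = Id_on I" unfolding cluster_chain_def cluster_rel_def by simp
  then show "cluster_chain 0 \<subseteq> r" using valid_equivs_bounds[OF r] by simp
  have "I \<times> I \<subseteq> cluster_chain (length inner_clusters)"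
  proof (cases "inner_cl I")
    case True
    then have "I \<in> set inner_clusters" using inner_clusters(1) I_in_T by blast
    then show ?thesis unfolding cluster_chain_def cluster_rel_def by auto
  next
    case False
    then obtain a where "I = {a}" unfolding inner_cl_def by blast
    then show ?thesis unfolding cluster_chain_def cluster_rel_def by auto
  qed
  then show "r \<subseteq> cluster_chain (length inner_clusters)" using valid_equivs_bounds[OF r] by blast
qed (use cluster_chain_in_valid_equivs covers_cluster_chain in auto)

definition lcas :: "('a \<times> 'a) set \<Rightarrow> 'a set set" where
  "lcas r = (\<lambda>(p, q). lca p q) ` r"

lemma lca_mem_lcas: "(p, q) \<in> r \<Longrightarrow> lca p q \<in> lcas r"
  unfolding lcas_def by force

lemma lcas_Id: "lcas (Id_on I) = (\<lambda>a. {a}) ` I"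
  unfolding lcas_def using lca_self by (auto simp: Id_on_def)

lemma lca_not_singleton: "a \<in> I \<Longrightarrow> b \<in> I \<Longrightarrow> a \<noteq> b \<Longrightarrow> lca a b \<notin> (\<lambda>a. {a}) ` I"
  using mem_lca by fastforce

lemma lca_path_through_fresh_pair:
  assumes r: "r \<in> valid_equivs" and \<alpha>\<beta>: "\<alpha> \<in> I" "\<beta> \<in> I" and fresh: "lca \<alpha> \<beta> \<notin> lcas r"
    and p\<alpha>: "(p, \<alpha>) \<in> r" and \<beta>q: "(\<beta>, q) \<in> r"
  shows "lca p q = lca p \<alpha> \<or> lca p q = lca \<alpha> \<beta> \<or> lca p q = lca \<beta> q"
proof -
  have er: "equiv I r" using valid_equivsD(1)[OF r] .
  have pq: "p \<in> I" "q \<in> I" using p\<alpha> \<beta>q equiv_type[OF er] by blast+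
  have "lca p \<alpha> \<noteq> lca \<alpha> \<beta>" "lca \<beta> q \<noteq> lca \<alpha> \<beta>" using fresh lca_mem_lcas p\<alpha> \<beta>q by metis+
  then have p\<beta>: "lca p \<beta> = lca p \<alpha> \<or> lca p \<beta> = lca \<alpha> \<beta>"
    using lca_ultrametric[OF pq(1) \<alpha>\<beta>] by blast
  have "lca p \<beta> \<noteq> lca \<beta> q"
  proof
    assume eq: "lca p \<beta> = lca \<beta> q"
    then have "lca p \<alpha> = lca \<beta> q" using p\<beta> \<open>lca \<beta> q \<noteq> lca \<alpha> \<beta>\<close> by auto
    then have "(p, \<beta>) \<in> r" using lca_validD[OF valid_equivsD(2)[OF r] p\<alpha> \<beta>q] by simp
    then have "(\<alpha>, \<beta>) \<in> r" using equiv_transD[OF er equiv_symD[OF er p\<alpha>]] by blast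
    then show False using fresh lca_mem_lcas by blast
  qed
  then show ?thesis using lca_ultrametric[OF pq(1) \<alpha>\<beta>(2) pq(2)] p\<beta> by auto
qed

lemma fresh_pair_cross:
  assumes r: "r \<in> valid_equivs" and xy: "x \<in> I" "y \<in> I" and fresh: "lca x y \<notin> lcas r"
    and ab: "(a, b) \<in> r" and cx: "(c, x) \<in> r" and yd: "(y, d) \<in> r" and eq: "lca a b = lca c d"
  shows "(a, c) \<in> r \<or> (a, y) \<in> r"
proof -
  have vr: "lca_valid r" using valid_equivsD(2)[OF r] .
  have "lca c d \<noteq> lca x y" using eq fresh lca_mem_lcas[OF ab] by auto
  then have "lca c d = lca c x \<or> lca c d = lca y d"
    using lca_path_through_fresh_pair[OF r xy fresh cx yd] by blast
  then show ?thesis using lca_validD[OF vr ab cx] lca_validD[OF vr ab yd] eq by auto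
qed

lemma merge_fresh_pair_in_valid_equivs:
  assumes r: "r \<in> valid_equivs" and \<alpha>\<beta>: "\<alpha> \<in> I" "\<beta> \<in> I" and fresh: "lca \<alpha> \<beta> \<notin> lcas r"
  shows "merge r {\<alpha>, \<beta>} \<in> valid_equivs"
proof (rule merge_in_valid_equivs[OF r])
  show "{\<alpha>, \<beta>} \<subseteq> I" using \<alpha>\<beta> by blast
next
  fix a b c d u v
  assume ab: "(a, b) \<in> r" and cu: "(c, u) \<in> r" and vd: "(v, d) \<in> r" and uv: "u \<in> {\<alpha>, \<beta>}" "v \<in> {\<alpha>, \<beta>}"
    and cd: "(c, d) \<notin> r" and eq: "lca a b = lca c d"
  have er: "equiv I r" using valid_equivsD(1)[OF r] .
  have "u \<noteq> v" using cu vd cd equiv_transD[OF er] by blast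
  then have "lca u v = lca \<alpha> \<beta>" using uv lca_commute by auto
  then have fresh_uv: "lca u v \<notin> lcas r" using fresh by simp
  have "u \<in> I" "v \<in> I" using uv \<alpha>\<beta> by auto
  then have "(a, c) \<in> r \<or> (a, v) \<in> r" using fresh_pair_cross[OF r _ _ fresh_uv ab cu vd eq] by blast
  then show "(a, c) \<in> merge r {\<alpha>, \<beta>}" using uv equiv_symD[OF er cu] unfolding merge_def by blast
qed

lemma lcas_merge_fresh_pair:
  assumes r: "r \<in> valid_equivs" and \<alpha>\<beta>: "\<alpha> \<in> I" "\<beta> \<in> I" and fresh: "lca \<alpha> \<beta> \<notin> lcas r"
  shows "lcas (merge r {\<alpha>, \<beta>}) \<subseteq> insert (lca \<alpha> \<beta>) (lcas r)"
proof
  fix W assume "W \<in> lcas (merge r {\<alpha>, \<beta>})"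
  then obtain p q where W: "W = lca p q" "(p, q) \<in> merge r {\<alpha>, \<beta>}" unfolding lcas_def by auto
  have er: "equiv I r" using valid_equivsD(1)[OF r] .
  show "W \<in> insert (lca \<alpha> \<beta>) (lcas r)"
  proof (cases "(p, q) \<in> r")
    case True
    then show ?thesis using W(1) lca_mem_lcas by blast
  next
    case False
    then obtain u v where uv: "(p, u) \<in> r" "(v, q) \<in> r" "u \<in> {\<alpha>, \<beta>}" "v \<in> {\<alpha>, \<beta>}"
      using W(2) unfolding merge_def by blast
    have "u \<noteq> v" using uv(1,2) False equiv_transD[OF er] by blast
    then have uv_lca: "lca u v = lca \<alpha> \<beta>" using uv(3,4) lca_commute by auto
    then have fresh_uv: "lca u v \<notin> lcas r" using fresh by simp
    have "u \<in> I" "v \<in> I" using uv \<alpha>\<beta> by auto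
    then have "lca p q = lca p u \<or> lca p q = lca u v \<or> lca p q = lca v q"
      using lca_path_through_fresh_pair[OF r _ _ fresh_uv uv(1,2)] by blast
    with W(1) uv_lca lca_mem_lcas[OF uv(1)] lca_mem_lcas[OF uv(2)] show ?thesis
      by (elim disjE) simp_all
  qed
qed

definition pair_rel :: "'a \<Rightarrow> 'a \<Rightarrow> ('a \<times> 'a) set" where
  "pair_rel a b = Id_on I \<union> {a, b} \<times> {a, b}"

lemma pair_rel_eq_merge: "a \<in> I \<Longrightarrow> b \<in> I \<Longrightarrow> pair_rel a b = merge (Id_on I) {a, b}"
  unfolding pair_rel_def merge_def by auto

lemma pair_rel_in_valid_equivs: "a \<in> I \<Longrightarrow> b \<in> I \<Longrightarrow> a \<noteq> b \<Longrightarrow> pair_rel a b \<in> valid_equivs"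
  using merge_fresh_pair_in_valid_equivs[OF Id_in_valid_equivs] pair_rel_eq_merge lcas_Id lca_not_singleton
  by simp

lemma atoms_valid_equivs:
  assumes "x \<in> atoms valid_equivs (\<subseteq>)"
  obtains a b where "a \<in> I" "b \<in> I" "a \<noteq> b" "x = pair_rel a b"
proof -
  obtain b where b: "b \<in> valid_equivs" "\<forall>y\<in>valid_equivs. b \<subseteq> y" "covers valid_equivs (\<subseteq>) b x"
    and x: "x \<in> valid_equivs"
    using assms unfolding atoms_def by blast
  have "b = Id_on I" using b(1,2) Id_in_valid_equivs valid_equivs_bounds[OF b(1)] by blast
  with b(3) x have x: "x \<in> valid_equivs" "covers valid_equivs (\<subseteq>) (Id_on I) x" by simp_all
  then have "\<not> x \<subseteq> Id_on I" unfolding covers_def by blast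
  then obtain a b where ab: "(a, b) \<in> x" "a \<noteq> b" using valid_equivs_bounds[OF x(1)] by auto
  have I: "a \<in> I" "b \<in> I" using ab(1) valid_equivs_bounds[OF x(1)] by blast+
  have "pair_rel a b \<subseteq> x"
    using ab(1) equiv_symD[OF valid_equivsD(1)[OF x(1)] ab(1)] valid_equivs_bounds[OF x(1)]
    unfolding pair_rel_def by blast
  moreover have "pair_rel a b \<noteq> Id_on I" "Id_on I \<subseteq> pair_rel a b"
    using ab(2) unfolding pair_rel_def by auto
  ultimately have "x = pair_rel a b"
    using x(2) pair_rel_in_valid_equivs[OF I ab(2)] unfolding covers_def by blast
  then show ?thesis using that I ab(2) by blast
qed

lemma level_pair_rel:
  assumes "a \<in> I" "b \<in> I" "a \<noteq> b"
  shows "level (\<subseteq>) cluster_chain (pair_rel a b) = (LEAST i. \<exists>E\<in>set (take i inner_clusters). lca a b \<subseteq> E)"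
proof -
  have "pair_rel a b \<subseteq> cluster_chain i \<longleftrightarrow> (a, b) \<in> cluster_chain i" for i
    using valid_equivs_bounds[OF cluster_chain_in_valid_equivs]
      equiv_symD[OF valid_equivsD(1)[OF cluster_chain_in_valid_equivs]]
    unfolding pair_rel_def by blast
  then show ?thesis unfolding level_def using mem_cluster_chain_iff[OF assms] by simp
qed

lemma trancl_pair_squares_valid:
  fixes m :: nat and \<alpha> \<beta> :: "nat \<Rightarrow> 'a"
  assumes pairs: "\<forall>i\<in>{1..m}. \<alpha> i \<in> I \<and> \<beta> i \<in> I \<and> \<alpha> i \<noteq> \<beta> i"
    and distinct: "inj_on (\<lambda>i. lca (\<alpha> i) (\<beta> i)) {1..m}"
  shows "(Id_on I \<union> (\<Union>i\<in>{1..m}. {\<alpha> i, \<beta> i} \<times> {\<alpha> i, \<beta> i}))\<^sup>+ \<in> valid_equivs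
    \<and> lcas ((Id_on I \<union> (\<Union>i\<in>{1..m}. {\<alpha> i, \<beta> i} \<times> {\<alpha> i, \<beta> i}))\<^sup>+)
        \<subseteq> (\<lambda>a. {a}) ` I \<union> (\<lambda>i. lca (\<alpha> i) (\<beta> i)) ` {1..m}"
  using assms
proof (induction m)
  case 0
  have "trans (Id_on I)" unfolding trans_def by blast
  then show ?case using Id_in_valid_equivs lcas_Id by simp
next
  case (Suc m)
  let ?r = "(Id_on I \<union> (\<Union>i\<in>{1..m}. {\<alpha> i, \<beta> i} \<times> {\<alpha> i, \<beta> i}))\<^sup>+"
  let ?W = "lca (\<alpha> (Suc m)) (\<beta> (Suc m))"
  have IH: "?r \<in> valid_equivs" "lcas ?r \<subseteq> (\<lambda>a. {a}) ` I \<union> (\<lambda>i. lca (\<alpha> i) (\<beta> i)) ` {1..m}"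
    using Suc by (auto simp: inj_on_def)
  have new: "\<alpha> (Suc m) \<in> I" "\<beta> (Suc m) \<in> I" "\<alpha> (Suc m) \<noteq> \<beta> (Suc m)" using Suc.prems(1) by auto
  have "?W \<notin> (\<lambda>i. lca (\<alpha> i) (\<beta> i)) ` {1..m}"
  proof
    assume "?W \<in> (\<lambda>i. lca (\<alpha> i) (\<beta> i)) ` {1..m}"
    then obtain j where "j \<in> {1..m}" "?W = lca (\<alpha> j) (\<beta> j)" by auto
    then have "Suc m = j" using inj_onD[OF Suc.prems(2)] by auto
    then show False using \<open>j \<in> {1..m}\<close> by simp
  qed
  then have fresh: "?W \<notin> lcas ?r" using IH(2) lca_not_singleton[OF new] by blast
  let ?A = "Id_on I \<union> (\<Union>i\<in>{1..m}. {\<alpha> i, \<beta> i} \<times> {\<alpha> i, \<beta> i})"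
  let ?C = "{\<alpha> (Suc m), \<beta> (Suc m)}"
  have "Id_on I \<union> (\<Union>i\<in>{1..Suc m}. {\<alpha> i, \<beta> i} \<times> {\<alpha> i, \<beta> i}) = ?A \<union> ?C \<times> ?C"
    by (auto simp: atLeastAtMostSuc_conv)
  then have "(Id_on I \<union> (\<Union>i\<in>{1..Suc m}. {\<alpha> i, \<beta> i} \<times> {\<alpha> i, \<beta> i}))\<^sup>+ = (?A \<union> ?C \<times> ?C)\<^sup>+"
    by (simp only:)
  also have "\<dots> = (?r \<union> ?C \<times> ?C)\<^sup>+" by (rule trancl_trancl_Un[symmetric])
  also have "\<dots> = merge ?r ?C" by (rule merge_eq_trancl[OF valid_equivsD(1)[OF IH(1)]]) (use new in blast)
  finally have "(Id_on I \<union> (\<Union>i\<in>{1..Suc m}. {\<alpha> i, \<beta> i} \<times> {\<alpha> i, \<beta> i}))\<^sup>+ = merge ?r ?C" .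
  then show ?case
    using merge_fresh_pair_in_valid_equivs[OF IH(1) new(1,2) fresh]
      lcas_merge_fresh_pair[OF IH(1) new(1,2) fresh] IH(2) by (auto simp: atLeastAtMostSuc_conv)
qed

lemma lca_in_Join_pair_rels:
  fixes \<alpha> \<beta> :: "nat \<Rightarrow> 'a"
  assumes pairs: "\<forall>i\<in>{1..k}. \<alpha> i \<in> I \<and> \<beta> i \<in> I \<and> \<alpha> i \<noteq> \<beta> i"
    and distinct: "inj_on (\<lambda>i. lca (\<alpha> i) (\<beta> i)) {1..k}"
    and pq: "(p, q) \<in> Join valid_equivs (\<subseteq>) ((\<lambda>i. pair_rel (\<alpha> i) (\<beta> i)) ` {1..k})"
  shows "lca p q \<in> (\<lambda>a. {a}) ` I \<union> (\<lambda>i. lca (\<alpha> i) (\<beta> i)) ` {1..k}"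
proof -
  note closure = trancl_pair_squares_valid[OF pairs distinct]
  have "Id_on I \<union> \<Union>((\<lambda>i. pair_rel (\<alpha> i) (\<beta> i)) ` {1..k})
      = Id_on I \<union> (\<Union>i\<in>{1..k}. {\<alpha> i, \<beta> i} \<times> {\<alpha> i, \<beta> i})"
    unfolding pair_rel_def by auto
  moreover have "(\<lambda>i. pair_rel (\<alpha> i) (\<beta> i)) ` {1..k} \<subseteq> valid_equivs"
    using pairs pair_rel_in_valid_equivs by auto
  ultimately have "Join valid_equivs (\<subseteq>) ((\<lambda>i. pair_rel (\<alpha> i) (\<beta> i)) ` {1..k})
      = (Id_on I \<union> (\<Union>i\<in>{1..k}. {\<alpha> i, \<beta> i} \<times> {\<alpha> i, \<beta> i}))\<^sup>+"
    using Join_valid_equivs closure by simp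
  then show ?thesis using pq closure lca_mem_lcas by blast
qed

lemma atoms_pair_rels:
  assumes "\<forall>i\<le>k. a i \<in> atoms valid_equivs (\<subseteq>)"
  obtains \<alpha> \<beta> where "\<And>i. i \<le> k \<Longrightarrow> \<alpha> i \<in> I \<and> \<beta> i \<in> I \<and> \<alpha> i \<noteq> \<beta> i \<and> a i = pair_rel (\<alpha> i) (\<beta> i)"
proof -
  have "\<forall>i. \<exists>\<alpha>\<beta>. i \<le> k \<longrightarrow> fst \<alpha>\<beta> \<in> I \<and> snd \<alpha>\<beta> \<in> I \<and> fst \<alpha>\<beta> \<noteq> snd \<alpha>\<beta> \<and> a i = pair_rel (fst \<alpha>\<beta>) (snd \<alpha>\<beta>)"
    using assms atoms_valid_equivs by (metis fst_conv snd_conv)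
  then obtain g where "\<And>i. i \<le> k \<Longrightarrow> fst (g i) \<in> I \<and> snd (g i) \<in> I \<and> fst (g i) \<noteq> snd (g i)
      \<and> a i = pair_rel (fst (g i)) (snd (g i))"
    by metis
  then show ?thesis using that[of "\<lambda>i. fst (g i)" "\<lambda>i. snd (g i)"] by blast
qed

lemma level_condition_cluster_chain: "level_condition valid_equivs (\<subseteq>) cluster_chain"
  unfolding level_condition_def
proof (intro allI impI notI)
  fix k :: nat and a :: "nat \<Rightarrow> ('a \<times> 'a) set"
  assume "1 \<le> k"
    and a: "(\<forall>i\<le>k. a i \<in> atoms valid_equivs (\<subseteq>))
      \<and> (\<forall>i<k. level (\<subseteq>) cluster_chain (a i) < level (\<subseteq>) cluster_chain (a (Suc i)))"
    and below: "a 0 \<subseteq> Join valid_equivs (\<subseteq>) (a ` {1..k})"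
  obtain \<alpha> \<beta> where \<alpha>\<beta>: "\<And>i. i \<le> k \<Longrightarrow> \<alpha> i \<in> I \<and> \<beta> i \<in> I \<and> \<alpha> i \<noteq> \<beta> i \<and> a i = pair_rel (\<alpha> i) (\<beta> i)"
    using atoms_pair_rels a by blast
  define L where "L i = level (\<subseteq>) cluster_chain (a i)" for i
  have L: "L i = (LEAST l. \<exists>E\<in>set (take l inner_clusters). lca (\<alpha> i) (\<beta> i) \<subseteq> E)" if "i \<le> k" for i
    using level_pair_rel \<alpha>\<beta>[OF that] unfolding L_def by simp
  have L_mono: "L i < L j" if ij: "i < j" "j \<le> k" for i j
  proof (rule lift_Suc_mono_less_ivl[of "{..<k}" L])
    show "L n < L (Suc n)" if "n \<in> {..<k}" for n using a that unfolding L_def by auto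
  qed (use ij in auto)
  have distinct: "lca (\<alpha> i) (\<beta> i) \<noteq> lca (\<alpha> j) (\<beta> j)" if ij: "i < j" "j \<le> k" for i j
    using L[of i] L[of j] L_mono[OF ij] ij by auto
  have "inj_on (\<lambda>i. lca (\<alpha> i) (\<beta> i)) {1..k}"
  proof (rule inj_onI)
    fix i j assume "i \<in> {1..k}" "j \<in> {1..k}" "lca (\<alpha> i) (\<beta> i) = lca (\<alpha> j) (\<beta> j)"
    then show "i = j" using distinct[of i j] distinct[of j i] by (cases i j rule: linorder_cases) auto
  qed
  moreover have "a ` {1..k} = (\<lambda>i. pair_rel (\<alpha> i) (\<beta> i)) ` {1..k}" using \<alpha>\<beta> by auto
  moreover have "(\<alpha> 0, \<beta> 0) \<in> a 0" using \<alpha>\<beta>[of 0] unfolding pair_rel_def by simp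
  ultimately have "lca (\<alpha> 0) (\<beta> 0) \<in> (\<lambda>a. {a}) ` I \<union> (\<lambda>i. lca (\<alpha> i) (\<beta> i)) ` {1..k}"
    using lca_in_Join_pair_rels[of k \<alpha> \<beta> "\<alpha> 0" "\<beta> 0"] \<alpha>\<beta> below by auto
  then obtain j where "j \<in> {1..k}" "lca (\<alpha> 0) (\<beta> 0) = lca (\<alpha> j) (\<beta> j)"
    using lca_not_singleton \<alpha>\<beta>[of 0] by auto
  then show False using distinct[of 0 j] by auto
qed

lemma LL_lattice_forest_interval: "LL_lattice (forest_interval I T) (forest_le I)"
proof -
  interpret lattice_embedding valid_equivs "(\<subseteq>)" forest_of "forest_le I"
    using finite_lattice_valid_equivs is_lub_valid_equivs forest_le_forest_of_iff
    by unfold_locales blast+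
  show ?thesis
    unfolding forest_interval_eq
    using LL_lattice_image[OF maximal_chain_cluster_chain cluster_chain_in_valid_equivs _
        level_condition_cluster_chain] left_modular_cluster_chain by blast
qed

end

theorem proposition5p6:
  fixes I :: "'a set" and T :: "'a set set"
  assumes "finite I" and "is_tree I T"
  shows "LL_lattice (forest_interval I T) (forest_le I)"
proof -
  interpret finite_tree I T using assms by unfold_locales
  show ?thesis by (rule LL_lattice_forest_interval)
qed

end
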